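(* Let $\mathcal{F}$ be a $T$-equivariant rank 2 $\mu$-stable reflexive sheaf on $\mathbb{P}^3$ with Chern classes $c_1,c_2,c_3$ (as integers) and toric data $\{(u_i,v_i,p_i)\}_{i=1,\dots,4}$. Then: (i) $c_3\equiv c_1c_2\pmod 2$; (ii) if $c_1\in\{-1,0\}$ then $c_2>0$; (iii) if $c_1=-1$ then $0\le c_3\le c_2^2$, and if $c_1=0$ then $0\le c_3\le c_2^2-c_2+2$. If $c_1=-1$, then $c_3=c_2^2$ if and only if one of the following holds: (a) there exist $\{i,j,k,l\}=\{1,2,3,4\}$ with $p_i=p_j$, $p_j,p_k,p_l$ mutually distinct, $v_i\ge1$, $v_j\ge1$, $v_k=1$, and $v_i+v_j=v_l$; (b) there exist $\{i,j,k,l\}=\{1,2,3,4\}$ with $v_i=0$, $p_j,p_k,p_l$ mutually distinct, $v_j=1$, and $v_k=v_l\ge1$. If $c_1=0$, then $c_3=c_2^2-c_2+2$ if and only if one of the following holds: (a) $p_1,p_2,p_3,p_4$ are mutually distinct and $v_1=v_2=v_3=v_4=1$; (b) there exist $\{i,j,k,l\}=\{1,2,3,4\}$ with $p_i=p_j$, $p_j,p_k,p_l$ mutually distinct, $v_i=v_j=1$ and $v_k=v_l=2$; (c) there exist $\{i,j,k,l\}=\{1,2,3,4\}$ with $v_i=0$, $p_j,p_k,p_l$ mutually distinct, and $v_j=v_k=v_l=2$.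
   Context: $T=(\mathbb{C}^* )^3$ is the dense open torus of $\mathbb{P}^3$; $\mathbb{P}^3$ is the toric variety of the fan in $\mathbb{Z}^3$ with rays $\rho_1,\dots,\rho_4$ generated by $n_1=e_1,n_2=e_2,n_3=e_3,n_4=-e_1-e_2-e_3$. By Klyachko's description, a $T$-equivariant rank 2 reflexive sheaf is given by four increasing filtrations $\{V^{\rho_i}(\lambda)\}_{\lambda\in\mathbb{Z}}$ of $\mathbb{C}^2$ (zero for $\lambda\ll0$, all of $\mathbb{C}^2$ for $\lambda\gg0$), the weight-$m$ sections over the chart of the cone spanned by $\rho_a,\rho_b,\rho_c$ being $V^{\rho_a}(\langle m,n_a\rangle)\cap V^{\rho_b}(\langle m,n_b\rangle)\cap V^{\rho_c}(\langle m,n_c\rangle)$; with these conventions a line bundle with jumps at $u_1,\dots,u_4$ has $c_1=-(u_1+\dots+u_4)H$. The toric data are the unique $u_i\in\mathbb{Z}$, $v_i\in\mathbb{Z}_{\ge0}$, $p_i\in\mathbb{P}^1=\mathrm{Gr}(1,\mathbb{C}^2)$ with $V^{\rho_i}(\lambda)=0$ for $\lambda<u_i$, $=p_i$ for $u_i\le\lambda<u_i+v_i$, $=\mathbb{C}^2$ for $\lambda\ge u_i+v_i$ (if $v_i=0$, $p_i$ does not occur). Stability is with respect to $\mathcal{O}(1)$; Chern classes are integers via $H^{2i}(\mathbb{P}^3,\mathbb{Z})=\mathbb{Z}H^i$, $H$ the hyperplane class. "There exist $\{i,j,k,l\}=\{1,2,3,4\}$" means for some ordering $i,j,k,l$ of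 the four indices. *)

theory Defs
  imports Complex_Main
begin

text \<open>Vectors of C^2 are pairs of complex numbers; the rays of the fan of P^3 are indexed 1..4.\<close>

type_synonym vec2 = "complex \<times> complex"

definition czero :: vec2 where "czero = (0, 0)"

definition csubspace :: "vec2 set \<Rightarrow> bool" where
  "csubspace S \<longleftrightarrow> czero \<in> S \<and>
     (\<forall>x\<in>S. \<forall>y\<in>S. (fst x + fst y, snd x + snd y) \<in> S) \<and>
     (\<forall>c::complex. \<forall>x\<in>S. (c * fst x, c * snd x) \<in> S)"

definition cline :: "vec2 \<Rightarrow> vec2 set" where
  "cline w = {(c * fst w, c * snd w) | c. True}"

definition is_P1_point :: "vec2 set \<Rightarrow> bool" where
  "is_P1_point L \<longleftrightarrow> (\<exists>w. w \<noteq> czero \<and> L = cline w)"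

text \<open>Complex dimension of a complex subspace of C^2 (only used on subspaces).\<close>
definition cdim :: "vec2 set \<Rightarrow> nat" where
  "cdim S = (if S = {czero} then 0 else if S = UNIV then 2 else 1)"

text \<open>Klyachko data of a T-equivariant rank 2 reflexive sheaf on P^3: four increasing
  filtrations of C^2 by complex subspaces, zero for small and everything for large index.\<close>
definition klyachko_filtrations :: "(nat \<Rightarrow> int \<Rightarrow> vec2 set) \<Rightarrow> bool" where
  "klyachko_filtrations V \<longleftrightarrow> (\<forall>i\<in>{1..4::nat}.
      (\<forall>l. csubspace (V i l)) \<and> (\<forall>l l'. l \<le> l' \<longrightarrow> V i l \<subseteq> V i l') \<and>
      (\<exists>a. \<forall>l<a. V i l = {czero}) \<and> (\<exists>b. \<forall>l\<ge>b. V i l = UNIV))"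

definition pairing :: "int \<times> int \<times> int \<Rightarrow> nat \<Rightarrow> int" where
  "pairing m i = (case m of (m1, m2, m3) \<Rightarrow>
      if i = 1 then m1 else if i = 2 then m2 else if i = 3 then m3 else - m1 - m2 - m3)"

text \<open>Filtrations of F(t) = F \<otimes> O(t D_4).\<close>
definition twist :: "(nat \<Rightarrow> int \<Rightarrow> vec2 set) \<Rightarrow> int \<Rightarrow> nat \<Rightarrow> int \<Rightarrow> vec2 set" where
  "twist V t i l = (if i = 4 then V i (l + t) else V i l)"

definition sections_dim :: "(nat \<Rightarrow> int \<Rightarrow> vec2 set) \<Rightarrow> int \<times> int \<times> int \<Rightarrow> nat" where
  "sections_dim V m = cdim (\<Inter>i\<in>{1..4::nat}. V i (pairing m i))"

definition h0 :: "(nat \<Rightarrow> int \<Rightarrow> vec2 set) \<Rightarrow> nat" where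
  "h0 V = (\<Sum>m\<in>{m. sections_dim V m \<noteq> 0}. sections_dim V m)"

definition hilbert :: "(nat \<Rightarrow> int \<Rightarrow> vec2 set) \<Rightarrow> int \<Rightarrow> nat" where
  "hilbert V t = h0 (twist V t)"

text \<open>Chern classes via Serre vanishing and Riemann-Roch for rank 2 reflexive sheaves on P^3
  (Hartshorne): for t large, chi(F(t)) = h^0(F(t)) =
  (c1'^3 - 3 c1' c2' + 3 c3)/6 + (c1'^2 - 2 c2') + 11 c1'/6 + 2,
  where c1' = c1 + 2t, c2' = c2 + c1 t + t^2 are the Chern classes of F(t).\<close>
definition has_chern_classes :: "(nat \<Rightarrow> int \<Rightarrow> vec2 set) \<Rightarrow> int \<Rightarrow> int \<Rightarrow> int \<Rightarrow> bool" where
  "has_chern_classes V c1 c2 c3 \<longleftrightarrow> (\<exists>T. \<forall>t\<ge>T.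
     (let a = c1 + 2 * t; b = c2 + c1 * t + t^2 in
      6 * int (hilbert V t) = a^3 - 3 * a * b + 3 * c3 + 6 * (a^2 - 2 * b) + 11 * a + 12))"

text \<open>First Chern class of the rank 1 equivariant subsheaf with filtrations W \<inter> V_i
  (a line bundle with jumps at the least index where W \<inter> V_i is nonzero).\<close>
definition sub_c1 :: "(nat \<Rightarrow> int \<Rightarrow> vec2 set) \<Rightarrow> vec2 set \<Rightarrow> int" where
  "sub_c1 V W = - (\<Sum>i\<in>{1..4::nat}. (LEAST l. W \<inter> V i l \<noteq> {czero}))"

text \<open>mu-stability w.r.t. O(1), tested on equivariant saturated rank 1 subsheaves:
  mu(F_W) = c1(F_W) < mu(F) = c1(F)/2.\<close>
definition mu_stable :: "(nat \<Rightarrow> int \<Rightarrow> vec2 set) \<Rightarrow> bool" where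
  "mu_stable V \<longleftrightarrow> (\<forall>W c1 c2 c3. is_P1_point W \<and> has_chern_classes V c1 c2 c3 \<longrightarrow>
      2 * sub_c1 V W < c1)"

definition toric_data ::
  "(nat \<Rightarrow> int \<Rightarrow> vec2 set) \<Rightarrow> (nat \<Rightarrow> int) \<Rightarrow> (nat \<Rightarrow> nat) \<Rightarrow> (nat \<Rightarrow> vec2 set) \<Rightarrow> bool" where
  "toric_data V u v p \<longleftrightarrow> (\<forall>i\<in>{1..4::nat}.
     (\<forall>l. V i l = (if l < u i then {czero} else if l < u i + int (v i) then p i else UNIV)) \<and>
     (0 < v i \<longrightarrow> is_P1_point (p i)))"

definition is_ordering4 :: "nat \<Rightarrow> nat \<Rightarrow> nat \<Rightarrow> nat \<Rightarrow> bool" where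
  "is_ordering4 i j k l \<longleftrightarrow> distinct [i, j, k, l] \<and> {i, j, k, l} = {1, 2, 3, 4}"

end

theory Submission
  imports Defs "HOL-Combinatorics.Permutations"
begin

(* Let L range over the distinct lines among the p_i with v_i > 0, and give L the weight w_L, the
   sum of the v_i with p_i = L.  For toric data every intersection of filtration pieces is 0, C^2
   or one of these lines, and dim X = #{L. L <= X} - (n - 2) [X = C^2] for the n lines.  Summing
   over lattice points, h^0(F(t)) becomes a signed sum of point counts of lattice simplices, an
   explicit cubic in t; comparing it with Riemann-Roch gives c1 = 2s + e1, c2 = s (s + e1) + e2 and
   c3 = e3, where e_k are the elementary symmetric functions of the weights and s is an integer
   shift.  The saturated equivariant line subsheaves are indexed by lines W, and mu-stability says
   exactly that every weight is less than half of e1; in particular there are three or four lines.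

   The theorem thus becomes an inequality between symmetric functions of three or four positive
   integers satisfying strict triangle inequalities.  For three weights a Ravi substitution
   a = y + z + 1, b = x + z + 1, c = x + y + 1 (odd e1) or a = y + z, b = x + z, c = x + y (even e1)
   turns c2^2 - c3, resp. c2^2 - c2 + 2 - c3, into a polynomial in x, y, z with nonnegative
   coefficients.  Four weights reduce to three by merging two whose sum is less than half of e1,
   which makes the inequality strict.  The equality cases are the weight multisets {1, b, b},
   resp. {1, 1, 1, 1} and {2, 2, 2}; as everything is invariant under relabelling the rays, they
   are translated back to the toric data on three normal forms of the configuration. *)

section \<open>Symmetric functions of triangle weights\<close>

lemma ravi_substitution_odd:
  fixes a b c :: int
  assumes "2 * a < a + b + c" "2 * b < a + b + c" "2 * c < a + b + c" "odd (a + b + c)"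
  obtains x y z where "x \<ge> 0" "y \<ge> 0" "z \<ge> 0" "a = y + z + 1" "b = x + z + 1" "c = x + y + 1"
proof -
  have "odd (b + c - a)" "odd (a + c - b)" "odd (a + b - c)" using assms(4) by presburger+
  then obtain x y z where "b + c - a = 2 * x + 1" "a + c - b = 2 * y + 1" "a + b - c = 2 * z + 1"
    by (meson oddE)
  with assms(1-3) show thesis by (intro that[of x y z]) linarith+
qed

lemma ravi_substitution_even:
  fixes a b c :: int
  assumes "2 * a < a + b + c" "2 * b < a + b + c" "2 * c < a + b + c" "even (a + b + c)"
  obtains x y z where "x \<ge> 1" "y \<ge> 1" "z \<ge> 1" "a = y + z" "b = x + z" "c = x + y"
proof -
  have "even (b + c - a)" "even (a + c - b)" "even (a + b - c)" using assms(4) by presburger+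
  then obtain x y z where "b + c - a = 2 * x" "a + c - b = 2 * y" "a + b - c = 2 * z"
    by (meson evenE)
  with assms(1-3) show thesis by (intro that[of x y z]) linarith+
qed

lemma three_weights_bound_odd:
  fixes a b c k :: int
  assumes "2 * a < a + b + c" "2 * b < a + b + c" "2 * c < a + b + c" "odd (a + b + c)"
    and k: "4 * k = (a + b + c)^2 + 1 - 2 * (a^2 + b^2 + c^2)"
  shows "a * b * c \<le> k^2"
    and "a * b * c = k^2 \<longleftrightarrow> (a = 1 \<and> b = c) \<or> (b = 1 \<and> a = c) \<or> (c = 1 \<and> a = b)"
    and "a + b \<le> 2 * k"
proof -
  obtain x y z where xyz: "x \<ge> 0" "y \<ge> 0" "z \<ge> 0" and abc: "a = y + z + 1" "b = x + z + 1" "c = x + y + 1"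
    using ravi_substitution_odd assms(1-4) by blast
  define s1 s2 s3 where "s1 = x + y + z" and "s2 = x * y + y * z + z * x" and "s3 = x * y * z"
  have "4 * k = 4 * (s2 + s1 + 1)" using k unfolding abc s1_def s2_def by algebra
  then have kk: "k = s2 + s1 + 1" by simp
  \<comment> \<open>the gap is a polynomial in x, y, z with nonnegative coefficients\<close>
  have gap: "k^2 - a * b * c = s2 * (1 + s1 + s2) + s3"
    unfolding kk abc s1_def s2_def s3_def by algebra
  have "s1 \<ge> 0" "s3 \<ge> 0" and s2: "x * y \<ge> 0" "y * z \<ge> 0" "z * x \<ge> 0"
    using xyz unfolding s1_def s3_def by simp_all
  then have "s2 * (1 + s1 + s2) \<ge> s2" "s2 \<ge> 0" unfolding s2_def
    by (simp_all add: mult_le_cancel_left1)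
  then show "a * b * c \<le> k^2" using gap \<open>s3 \<ge> 0\<close> by linarith
  have "a * b * c = k^2 \<longleftrightarrow> x * y = 0 \<and> y * z = 0 \<and> z * x = 0"
  proof
    assume "a * b * c = k^2"
    then show "x * y = 0 \<and> y * z = 0 \<and> z * x = 0"
      using gap s2 \<open>s3 \<ge> 0\<close> \<open>s2 * (1 + s1 + s2) \<ge> s2\<close> unfolding s2_def by linarith
  next
    assume "x * y = 0 \<and> y * z = 0 \<and> z * x = 0"
    then have "s2 = 0" "s3 = 0" unfolding s2_def s3_def by auto
    then show "a * b * c = k^2" using gap by simp
  qed
  also have "\<dots> \<longleftrightarrow> (a = 1 \<and> b = c) \<or> (b = 1 \<and> a = c) \<or> (c = 1 \<and> a = b)"
    using xyz unfolding abc by auto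
  finally show "a * b * c = k^2 \<longleftrightarrow> (a = 1 \<and> b = c) \<or> (b = 1 \<and> a = c) \<or> (c = 1 \<and> a = b)" .
  show "a + b \<le> 2 * k" using \<open>s2 \<ge> 0\<close> xyz unfolding kk abc s1_def by simp
qed

lemma three_weights_bound_even:
  fixes a b c k :: int
  assumes "2 * a < a + b + c" "2 * b < a + b + c" "2 * c < a + b + c" "even (a + b + c)"
    and k: "4 * k = (a + b + c)^2 - 2 * (a^2 + b^2 + c^2)"
  shows "a * b * c \<le> k^2 - k + 2"
    and "a * b * c = k^2 - k + 2 \<longleftrightarrow> a = 2 \<and> b = 2 \<and> c = 2"
    and "a + b < 2 * k"
proof -
  obtain x y z where xyz: "x \<ge> 1" "y \<ge> 1" "z \<ge> 1" and abc: "a = y + z" "b = x + z" "c = x + y"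
    using ravi_substitution_even assms(1-4) by blast
  have "4 * k = 4 * (x * y + y * z + z * x)" using k unfolding abc by algebra
  then have kk: "k = x * y + y * z + z * x" by simp
  define q1 q2 q3 where "q1 = (x - 1) + (y - 1) + (z - 1)"
    and "q2 = (x - 1) * (y - 1) + (y - 1) * (z - 1) + (z - 1) * (x - 1)"
    and "q3 = (x - 1) * (y - 1) * (z - 1)"
  have gap: "k^2 - k + 2 - a * b * c = (k - 1) * q1 + k * q2 + q3"
    unfolding kk abc q1_def q2_def q3_def by algebra
  have "q1 \<ge> 0" "q2 \<ge> 0" "q3 \<ge> 0" using xyz unfolding q1_def q2_def q3_def by simp_all
  have "x * y \<ge> 1" "y * z \<ge> 1" "z * x \<ge> 1"
    using xyz mult_mono[of 1 x 1 y] mult_mono[of 1 y 1 z] mult_mono[of 1 z 1 x] by simp_all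
  then have "k \<ge> 3" unfolding kk by linarith
  with \<open>q1 \<ge> 0\<close> \<open>q2 \<ge> 0\<close> have "(k - 1) * q1 \<ge> q1" "k * q2 \<ge> 0"
    by (simp_all add: mult_le_cancel_right1)
  with gap \<open>q2 \<ge> 0\<close> \<open>q3 \<ge> 0\<close> \<open>q1 \<ge> 0\<close> show "a * b * c \<le> k^2 - k + 2" by linarith
  have "a * b * c = k^2 - k + 2 \<longleftrightarrow> q1 = 0"
  proof
    assume "a * b * c = k^2 - k + 2"
    then show "q1 = 0" using gap \<open>(k - 1) * q1 \<ge> q1\<close> \<open>k * q2 \<ge> 0\<close> \<open>q1 \<ge> 0\<close> \<open>q3 \<ge> 0\<close> by linarith
  next
    assume "q1 = 0"
    then have "x = 1" "y = 1" "z = 1" using xyz unfolding q1_def by linarith+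
    then show "a * b * c = k^2 - k + 2" unfolding abc kk by simp
  qed
  also have "\<dots> \<longleftrightarrow> a = 2 \<and> b = 2 \<and> c = 2" using xyz unfolding q1_def abc by auto
  finally show "a * b * c = k^2 - k + 2 \<longleftrightarrow> a = 2 \<and> b = 2 \<and> c = 2" .
  have "2 * k - a - b = 2 * z * (y - 1) + x * (2 * z - 1) + y * (2 * x - 1)"
    unfolding kk abc by algebra
  moreover have "z * (y - 1) \<ge> 0" "x * (2 * z - 1) \<ge> 1" "y * (2 * x - 1) \<ge> 1"
    using xyz mult_mono[of 1 x 1 "2 * z - 1"] mult_mono[of 1 y 1 "2 * x - 1"] by simp_all
  ultimately show "a + b < 2 * k" by linarith
qed

lemma four_weights_merge_odd:
  fixes a b c d k :: int
  assumes "c \<ge> 1" "d \<ge> 1" "2 * a < a + b + c + d" "2 * b < a + b + c + d"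
    "2 * (c + d) < a + b + c + d" "odd (a + b + c + d)"
    and k: "4 * k = (a + b + c + d)^2 + 1 - 2 * (a^2 + b^2 + c^2 + d^2)"
  shows "a * b * c + a * b * d + a * c * d + b * c * d < k^2"
proof -
  define k' where "k' = k - c * d"
  have k': "4 * k' = (a + b + (c + d))^2 + 1 - 2 * (a^2 + b^2 + (c + d)^2)"
    using k unfolding k'_def by algebra
  have "a * b * (c + d) \<le> k'^2" "a + b \<le> 2 * k'"
    using three_weights_bound_odd(1,3)[OF _ _ _ _ k'] assms(3-6) by (simp_all add: add.assoc)
  moreover have "k^2 - (a * b * c + a * b * d + a * c * d + b * c * d)
      = (k'^2 - a * b * (c + d)) + c * d * (2 * k' + c * d - a - b)"
    unfolding k'_def by algebra
  moreover have "c * d \<ge> 1" using mult_mono[of 1 c 1 d] assms(1,2) by simp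
  then have "c * d * (2 * k' + c * d - a - b) \<ge> 1"
    using \<open>a + b \<le> 2 * k'\<close> mult_mono[of 1 "c * d" 1 "2 * k' + c * d - a - b"] by simp
  ultimately show ?thesis by linarith
qed

lemma four_weights_merge_even:
  fixes a b c d k :: int
  assumes "c \<ge> 1" "d \<ge> 1" "2 * a < a + b + c + d" "2 * b < a + b + c + d"
    "2 * (c + d) < a + b + c + d" "even (a + b + c + d)"
    and k: "4 * k = (a + b + c + d)^2 - 2 * (a^2 + b^2 + c^2 + d^2)"
  shows "a * b * c + a * b * d + a * c * d + b * c * d < k^2 - k + 2"
proof -
  define k' where "k' = k - c * d"
  have k': "4 * k' = (a + b + (c + d))^2 - 2 * (a^2 + b^2 + (c + d)^2)"
    using k unfolding k'_def by algebra
  have "a * b * (c + d) \<le> k'^2 - k' + 2" "a + b < 2 * k'"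
    using three_weights_bound_even(1,3)[OF _ _ _ _ k'] assms(3-6) by (simp_all add: add.assoc)
  moreover have "k^2 - k + 2 - (a * b * c + a * b * d + a * c * d + b * c * d)
      = (k'^2 - k' + 2 - a * b * (c + d)) + c * d * (2 * k' + c * d - 1 - a - b)"
    unfolding k'_def by algebra
  moreover have "c * d \<ge> 1" using mult_mono[of 1 c 1 d] assms(1,2) by simp
  then have "c * d * (2 * k' + c * d - 1 - a - b) \<ge> 1"
    using \<open>a + b < 2 * k'\<close> mult_mono[of 1 "c * d" 1 "2 * k' + c * d - 1 - a - b"] by simp
  ultimately show ?thesis by linarith
qed

lemma four_weights_bound_odd:
  fixes a b c d k :: int
  assumes "a \<ge> 1" "b \<ge> 1" "c \<ge> 1" "d \<ge> 1" "2 * a < a + b + c + d" "2 * b < a + b + c + d"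
    "2 * c < a + b + c + d" "2 * d < a + b + c + d" "odd (a + b + c + d)"
    and k: "4 * k = (a + b + c + d)^2 + 1 - 2 * (a^2 + b^2 + c^2 + d^2)"
  shows "a * b * c + a * b * d + a * c * d + b * c * d < k^2"
proof (cases "c + d < a + b")
  case True
  then show ?thesis using four_weights_merge_odd[OF assms(3,4,5,6) _ assms(9) k] by simp
next
  case False
  \<comment> \<open>an odd total weight cannot be split into two equal halves\<close>
  then have "a + b < c + d" using assms(9) by presburger
  then have "c * d * a + c * d * b + c * a * b + d * a * b < k^2"
    using four_weights_merge_odd[of a b c d k] assms by (simp add: ac_simps)
  then show ?thesis by (simp add: ac_simps)
qed

lemma four_weights_unbalanced_even:
  fixes a b c d k :: int
  assumes "a \<ge> 1" "b \<ge> 1" "c \<ge> 1" "d \<ge> 1" "2 * a < a + b + c + d" "2 * b < a + b + c + d"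
    "2 * c < a + b + c + d" "2 * d < a + b + c + d" "even (a + b + c + d)"
    and k: "4 * k = (a + b + c + d)^2 - 2 * (a^2 + b^2 + c^2 + d^2)"
    and "a + b \<noteq> c + d"
  shows "a * b * c + a * b * d + a * c * d + b * c * d < k^2 - k + 2"
proof (cases "c + d < a + b")
  case True
  then show ?thesis using four_weights_merge_even[OF assms(3,4,5,6) _ assms(9) k] by simp
next
  case False
  then have "a + b < c + d" using assms(11) by simp
  then have "c * d * a + c * d * b + c * a * b + d * a * b < k^2 - k + 2"
    using four_weights_merge_even[of a b c d k] assms by (simp add: ac_simps)
  then show ?thesis by (simp add: ac_simps)
qed

lemma four_weights_bound_even:
  fixes a b c d k :: int
  assumes "a \<ge> 1" "b \<ge> 1" "c \<ge> 1" "d \<ge> 1" "2 * a < a + b + c + d" "2 * b < a + b + c + d"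
    "2 * c < a + b + c + d" "2 * d < a + b + c + d" "even (a + b + c + d)"
    and k: "4 * k = (a + b + c + d)^2 - 2 * (a^2 + b^2 + c^2 + d^2)"
  shows "a * b * c + a * b * d + a * c * d + b * c * d \<le> k^2 - k + 2"
    and "a * b * c + a * b * d + a * c * d + b * c * d = k^2 - k + 2 \<longleftrightarrow> a = 1 \<and> b = 1 \<and> c = 1 \<and> d = 1"
proof -
  have "a * b * c + a * b * d + a * c * d + b * c * d \<le> k^2 - k + 2
    \<and> (a * b * c + a * b * d + a * c * d + b * c * d = k^2 - k + 2 \<longleftrightarrow> a = 1 \<and> b = 1 \<and> c = 1 \<and> d = 1)"
  proof (cases "a = b \<and> b = c \<and> c = d")
    case True
    then have "b = a" "c = a" "d = a" by simp_all
    then have "k = 2 * a^2" and e3: "a * b * c + a * b * d + a * c * d + b * c * d = 4 * a^3"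
      using k by (simp_all add: power2_eq_square power3_eq_cube algebra_simps)
    then have gap: "k^2 - k + 2 - (a * b * c + a * b * d + a * c * d + b * c * d)
        = 2 * (a - 1)^2 * (2 * a^2 + 2 * a + 1)"
      unfolding e3 by algebra
    have "2 * a^2 + 2 * a + 1 > 0" using assms(1) by (simp add: add_pos_nonneg)
    then have "2 * (a - 1)^2 * (2 * a^2 + 2 * a + 1) \<ge> 0"
      and "2 * (a - 1)^2 * (2 * a^2 + 2 * a + 1) = 0 \<longleftrightarrow> a = 1" by simp_all
    then show ?thesis using gap \<open>b = a\<close> \<open>c = a\<close> \<open>d = a\<close> by auto
  next
    case False
    then consider "a + b \<noteq> c + d" | "a + c \<noteq> b + d" | "a + d \<noteq> b + c" by linarith
    then have "a * b * c + a * b * d + a * c * d + b * c * d < k^2 - k + 2"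
    proof cases
      case 1
      then show ?thesis using four_weights_unbalanced_even[OF assms] by simp
    next
      case 2
      then have "a * c * b + a * c * d + a * b * d + c * b * d < k^2 - k + 2"
        using four_weights_unbalanced_even[of a c b d k] assms by (simp add: ac_simps)
      then show ?thesis by (simp add: ac_simps)
    next
      case 3
      then have "a * d * b + a * d * c + a * b * c + d * b * c < k^2 - k + 2"
        using four_weights_unbalanced_even[of a d b c k] assms by (simp add: ac_simps)
      then show ?thesis by (simp add: ac_simps)
    qed
    then show ?thesis using False by auto
  qed
  then show "a * b * c + a * b * d + a * c * d + b * c * d \<le> k^2 - k + 2"
    and "a * b * c + a * b * d + a * c * d + b * c * d = k^2 - k + 2 \<longleftrightarrow> a = 1 \<and> b = 1 \<and> c = 1 \<and> d = 1"
    by simp_all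
qed

(* A vanishing weight d encodes a configuration of three weights. *)

lemma weights_bound_odd:
  fixes a b c d k :: int
  assumes "a \<ge> 1" "b \<ge> 1" "c \<ge> 1" "d \<ge> 0" "2 * a < a + b + c + d" "2 * b < a + b + c + d"
    "2 * c < a + b + c + d" "2 * d < a + b + c + d" "odd (a + b + c + d)"
    and k: "4 * k = (a + b + c + d)^2 + 1 - 2 * (a^2 + b^2 + c^2 + d^2)"
  shows "a * b * c + a * b * d + a * c * d + b * c * d \<le> k^2"
    and "a * b * c + a * b * d + a * c * d + b * c * d = k^2
      \<longleftrightarrow> d = 0 \<and> ((a = 1 \<and> b = c) \<or> (b = 1 \<and> a = c) \<or> (c = 1 \<and> a = b))"
  by (cases "d = 0";
      use three_weights_bound_odd(1,2)[of a b c k] four_weights_bound_odd[of a b c d k] assms in simp)+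

lemma weights_bound_even:
  fixes a b c d k :: int
  assumes "a \<ge> 1" "b \<ge> 1" "c \<ge> 1" "d \<ge> 0" "2 * a < a + b + c + d" "2 * b < a + b + c + d"
    "2 * c < a + b + c + d" "2 * d < a + b + c + d" "even (a + b + c + d)"
    and k: "4 * k = (a + b + c + d)^2 - 2 * (a^2 + b^2 + c^2 + d^2)"
  shows "a * b * c + a * b * d + a * c * d + b * c * d \<le> k^2 - k + 2"
    and "a * b * c + a * b * d + a * c * d + b * c * d = k^2 - k + 2
      \<longleftrightarrow> (a = 1 \<and> b = 1 \<and> c = 1 \<and> d = 1) \<or> (d = 0 \<and> a = 2 \<and> b = 2 \<and> c = 2)"
  by (cases "d = 0";
      use three_weights_bound_even(1,2)[of a b c k] four_weights_bound_even[of a b c d k] assms in simp)+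

lemma even_mult_mult_add: "even (x * y * (x + y :: int))"
  by auto

lemma chern_parity_of_weights:
  fixes a b c d y :: int
  defines "V \<equiv> a + b + c + d"
  shows "even ((a * b * c + a * b * d + a * c * d + b * c * d)
    - (2 * y + V) * (y^2 + y * V + (a * b + a * c + a * d + b * c + b * d + c * d)))"
proof -
  have "(2 * y + V) * (y^2 + y * V + (a * b + a * c + a * d + b * c + b * d + c * d))
      - (a * b * c + a * b * d + a * c * d + b * c * d)
    = a * b * (a + b) + a * c * (a + c) + a * d * (a + d) + b * c * (b + c) + b * d * (b + d)
      + c * d * (c + d) + 2 * (a * b * c + a * b * d + a * c * d + b * c * d)
      + 2 * y * (a * b + a * c + a * d + b * c + b * d + c * d) + y * (y + V) * (y + (y + V))"
    unfolding V_def by algebra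
  then have "even ((2 * y + V) * (y^2 + y * V + (a * b + a * c + a * d + b * c + b * d + c * d))
      - (a * b * c + a * b * d + a * c * d + b * c * d))"
    by (simp only:) (intro dvd_add even_mult_mult_add; simp)
  then show ?thesis by (simp add: even_diff_iff)
qed

lemma chern_bounds_of_four_weights:
  fixes a b c d y c1 c2 c3 :: int
  defines "V \<equiv> a + b + c + d" and "Q \<equiv> a^2 + b^2 + c^2 + d^2"
  assumes pos: "a \<ge> 1" "b \<ge> 1" "c \<ge> 1" "d \<ge> 0"
    and half: "2 * a < V" "2 * b < V" "2 * c < V" "2 * d < V"
    and c1: "c1 = 2 * y + V"
    and c2: "c2 = y^2 + y * V + (a * b + a * c + a * d + b * c + b * d + c * d)"
    and c3: "c3 = a * b * c + a * b * d + a * c * d + b * c * d"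
  shows "even (c3 - c1 * c2)"
    and "c1 \<in> {-1, 0} \<Longrightarrow> c2 > 0"
    and "c1 = -1 \<Longrightarrow> 0 \<le> c3 \<and> c3 \<le> c2^2
      \<and> (c3 = c2^2 \<longleftrightarrow> d = 0 \<and> ((a = 1 \<and> b = c) \<or> (b = 1 \<and> a = c) \<or> (c = 1 \<and> a = b)))"
    and "c1 = 0 \<Longrightarrow> 0 \<le> c3 \<and> c3 \<le> c2^2 - c2 + 2
      \<and> (c3 = c2^2 - c2 + 2 \<longleftrightarrow> (a = 1 \<and> b = 1 \<and> c = 1 \<and> d = 1) \<or> (d = 0 \<and> a = 2 \<and> b = 2 \<and> c = 2))"
proof -
  show "even (c3 - c1 * c2)" unfolding c1 c2 c3 V_def by (rule chern_parity_of_weights)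
  have "0 \<le> c3" unfolding c3 using pos by simp
  have quadratic: "4 * c2 = (2 * y)^2 + 2 * (2 * y) * V + 2 * (V^2 - Q)"
    unfolding c2 V_def Q_def by algebra
  have "V^2 - 2 * Q = a * (V - 2 * a) + b * (V - 2 * b) + c * (V - 2 * c) + d * (V - 2 * d)"
    unfolding V_def Q_def by algebra
  moreover have "a * (V - 2 * a) \<ge> 1" "b * (V - 2 * b) \<ge> 1" "c * (V - 2 * c) \<ge> 1" "d * (V - 2 * d) \<ge> 0"
    using pos half mult_mono[of 1 a 1 "V - 2 * a"] mult_mono[of 1 b 1 "V - 2 * b"]
      mult_mono[of 1 c 1 "V - 2 * c"] by simp_all
  ultimately have "V^2 - 2 * Q \<ge> 3" by linarith
  have odd: "4 * c2 = V^2 + 1 - 2 * Q" "odd V" if "c1 = -1"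
  proof -
    have "2 * y = -1 - V" using c1 that by simp
    then show "4 * c2 = V^2 + 1 - 2 * Q" "odd V" unfolding quadratic by (algebra, presburger)
  qed
  have even: "4 * c2 = V^2 - 2 * Q" "even V" if "c1 = 0"
  proof -
    have "2 * y = - V" using c1 that by simp
    then show "4 * c2 = V^2 - 2 * Q" "even V" unfolding quadratic by (algebra, presburger)
  qed
  show "c1 \<in> {-1, 0} \<Longrightarrow> c2 > 0"
    using odd(1) even(1) \<open>V^2 - 2 * Q \<ge> 3\<close> by fastforce
  show "c1 = -1 \<Longrightarrow> 0 \<le> c3 \<and> c3 \<le> c2^2
      \<and> (c3 = c2^2 \<longleftrightarrow> d = 0 \<and> ((a = 1 \<and> b = c) \<or> (b = 1 \<and> a = c) \<or> (c = 1 \<and> a = b)))"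
    using weights_bound_odd[of a b c d c2] pos half odd \<open>0 \<le> c3\<close> unfolding c3 V_def Q_def by simp
  show "c1 = 0 \<Longrightarrow> 0 \<le> c3 \<and> c3 \<le> c2^2 - c2 + 2
      \<and> (c3 = c2^2 - c2 + 2 \<longleftrightarrow> (a = 1 \<and> b = 1 \<and> c = 1 \<and> d = 1) \<or> (d = 0 \<and> a = 2 \<and> b = 2 \<and> c = 2))"
    using weights_bound_even[of a b c d c2] pos half even \<open>0 \<le> c3\<close> unfolding c3 V_def Q_def by simp
qed

section \<open>Multisets of weights\<close>

lemma mset3_eq_1bb_iff:
  "(\<exists>b. {#x, y, z#} = {#1, b, b#}) \<longleftrightarrow> (x = 1 \<and> y = z) \<or> (y = 1 \<and> x = z) \<or> (z = 1 \<and> x = (y::nat))"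
  by (auto simp: add_eq_conv_ex)

lemma mset3_eq_222_iff: "{#x, y, z#} = {#2, 2, 2#} \<longleftrightarrow> x = 2 \<and> y = 2 \<and> z = (2::nat)"
  by (auto simp: add_eq_conv_ex)

lemma mset4_eq_1111_iff: "{#w, x, y, z#} = {#1, 1, 1, 1#} \<longleftrightarrow> w = 1 \<and> x = 1 \<and> y = 1 \<and> z = (1::nat)"
  by (auto simp: add_eq_conv_ex)

lemma mset3_ne_mset4: "{#a, b, c#} \<noteq> {#d, e, f, g#}" "{#d, e, f, g#} \<noteq> {#a, b, c#}"
  by (metis size_add_mset size_empty n_not_Suc_n)+

lemma mset_size_3_4_cases:
  assumes "size W = 3 \<or> size W = 4"
  obtains a b c where "W = {#a, b, c#}" | a b c d where "W = {#a, b, c, d#}"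
proof -
  obtain xs where "W = mset xs" by (metis ex_mset)
  with assms that show thesis by (auto simp: numeral_eq_Suc length_Suc_conv)
qed

lemma positive_mset_size_3_4_cases:
  assumes "size W = 3 \<or> size W = 4" "\<forall>x\<in>#W. 0 < x"
  obtains a b c d :: nat where "0 < a" "0 < b" "0 < c" "W = {#a, b, c#} \<and> d = 0 \<or> W = {#a, b, c, d#} \<and> 0 < d"
  using assms by (cases rule: mset_size_3_4_cases) auto

lemma mset_extremal_odd_iff:
  fixes a b c d :: nat
  assumes "W = {#a, b, c#} \<and> d = 0 \<or> W = {#a, b, c, d#} \<and> 0 < d"
  shows "(\<exists>e. W = {#1, e, e#}) \<longleftrightarrow> d = 0 \<and> ((a = 1 \<and> b = c) \<or> (b = 1 \<and> a = c) \<or> (c = 1 \<and> a = b))"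
  using assms
proof (elim disjE conjE)
  assume "W = {#a, b, c#}" "d = 0"
  then show ?thesis using mset3_eq_1bb_iff[of a b c] by simp
next
  assume "W = {#a, b, c, d#}" "0 < d"
  then show ?thesis by (simp add: mset3_ne_mset4)
qed

lemma mset_extremal_even_iff:
  fixes a b c d :: nat
  assumes "W = {#a, b, c#} \<and> d = 0 \<or> W = {#a, b, c, d#} \<and> 0 < d"
  shows "W = {#1, 1, 1, 1#} \<or> W = {#2, 2, 2#}
    \<longleftrightarrow> (a = 1 \<and> b = 1 \<and> c = 1 \<and> d = 1) \<or> (d = 0 \<and> a = 2 \<and> b = 2 \<and> c = 2)"
  using assms
proof (elim disjE conjE)
  assume "W = {#a, b, c#}" "d = 0"
  then show ?thesis using mset3_eq_222_iff[of a b c] by (simp add: mset3_ne_mset4)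
next
  assume "W = {#a, b, c, d#}" "0 < d"
  then show ?thesis using mset4_eq_1111_iff[of a b c d] by (simp add: mset3_ne_mset4)
qed

definition power_sum :: "nat \<Rightarrow> nat multiset \<Rightarrow> int" where
  "power_sum k W = int (\<Sum>\<^sub># (image_mset (\<lambda>x. x ^ k) W))"

lemma power_sum_empty [simp]: "power_sum k {#} = 0"
  unfolding power_sum_def by simp

lemma power_sum_add_mset [simp]: "power_sum k (add_mset x W) = int x ^ k + power_sum k W"
  unfolding power_sum_def by simp

lemma chern_bounds_of_weight_mset:
  fixes W :: "nat multiset" and y c1 c2 c3 :: int
  assumes size: "size W = 3 \<or> size W = 4" and pos: "\<forall>x\<in>#W. 0 < x"
    and half: "\<forall>x\<in>#W. 2 * x < \<Sum>\<^sub># W"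
    and c1: "c1 = 2 * y + power_sum 1 W"
    and c2: "2 * c2 = 2 * y^2 + 2 * y * power_sum 1 W + power_sum 1 W ^ 2 - power_sum 2 W"
    and c3: "6 * c3 = power_sum 1 W ^ 3 - 3 * power_sum 1 W * power_sum 2 W + 2 * power_sum 3 W"
  shows "even (c3 - c1 * c2)
    \<and> (c1 \<in> {-1, 0} \<longrightarrow> c2 > 0)
    \<and> (c1 = -1 \<longrightarrow> 0 \<le> c3 \<and> c3 \<le> c2^2)
    \<and> (c1 = 0 \<longrightarrow> 0 \<le> c3 \<and> c3 \<le> c2^2 - c2 + 2)
    \<and> (c1 = -1 \<longrightarrow> (c3 = c2^2 \<longleftrightarrow> (\<exists>b. W = {#1, b, b#})))
    \<and> (c1 = 0 \<longrightarrow> (c3 = c2^2 - c2 + 2 \<longleftrightarrow> W = {#1, 1, 1, 1#} \<or> W = {#2, 2, 2#}))"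
proof -
  obtain a b c d where abc: "0 < a" "0 < b" "0 < c"
    and W: "W = {#a, b, c#} \<and> d = 0 \<or> W = {#a, b, c, d#} \<and> 0 < d"
    using positive_mset_size_3_4_cases[OF size pos] by blast
  define V where "V = int a + int b + int c + int d"
  have "power_sum k W = int a ^ k + int b ^ k + int c ^ k + int d ^ k" if "k > 0" for k
    using W that by auto
  then have p1: "power_sum 1 W = V" and p2: "power_sum 2 W = int a^2 + int b^2 + int c^2 + int d^2"
    and p3: "power_sum 3 W = int a^3 + int b^3 + int c^3 + int d^3"
    unfolding V_def by simp_all
  have half': "2 * int x < V" if "x \<in># W" for x
    using half that W unfolding V_def by fastforce
  have halves: "2 * int a < V" "2 * int b < V" "2 * int c < V" "2 * int d < V"
    using half'[of a] half'[of b] half'[of c] half'[of d] W abc unfolding V_def by auto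
  have "2 * c2 = 2 * (y^2 + y * V + (int a * int b + int a * int c + int a * int d + int b * int c
      + int b * int d + int c * int d))"
    unfolding c2 p1 p2 V_def by algebra
  then have c2': "c2 = y^2 + y * V + (int a * int b + int a * int c + int a * int d + int b * int c
      + int b * int d + int c * int d)" by simp
  have "6 * c3 = 6 * (int a * int b * int c + int a * int b * int d + int a * int c * int d
      + int b * int c * int d)"
    unfolding c3 p1 p2 p3 V_def by algebra
  then have c3': "c3 = int a * int b * int c + int a * int b * int d + int a * int c * int d
      + int b * int c * int d" by simp
  have "int a \<ge> 1" "int b \<ge> 1" "int c \<ge> 1" "int d \<ge> 0" using abc by simp_all
  note bounds = chern_bounds_of_four_weights[where a = "int a" and b = "int b" and c = "int c" and d = "int d",
      folded V_def, OF this halves c1[unfolded p1] c2' c3']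
  show ?thesis
    using bounds unfolding mset_extremal_odd_iff[OF W] mset_extremal_even_iff[OF W] of_nat_eq_iff of_nat_eq_0_iff
      of_nat_eq_1_iff of_nat_eq_numeral_iff by blast
qed

section \<open>Weighted lines of the toric data\<close>

lemma atLeastAtMost_1_4: "{1..4::nat} = {1, 2, 3, 4}"
  by auto

lemma sum_1_4: "(\<Sum>i\<in>{1..4::nat}. f i) = f 1 + f 2 + f 3 + f 4"
  unfolding atLeastAtMost_1_4 by (simp add: add.assoc)

definition lines :: "(nat \<Rightarrow> nat) \<Rightarrow> (nat \<Rightarrow> 'a) \<Rightarrow> 'a set" where
  "lines v p = p ` {i \<in> {1..4}. 0 < v i}"

definition line_weight :: "(nat \<Rightarrow> nat) \<Rightarrow> (nat \<Rightarrow> 'a) \<Rightarrow> 'a \<Rightarrow> nat" where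
  "line_weight v p L = (\<Sum>i\<in>{1..4}. if p i = L then v i else 0)"

definition line_weights :: "(nat \<Rightarrow> nat) \<Rightarrow> (nat \<Rightarrow> 'a) \<Rightarrow> nat multiset" where
  "line_weights v p = image_mset (line_weight v p) (mset_set (lines v p))"

lemma finite_lines: "finite (lines v p)"
  unfolding lines_def by simp

lemma card_lines_le_4: "card (lines v p) \<le> 4"
proof -
  have "card (lines v p) \<le> card {i \<in> {1..4::nat}. 0 < v i}" unfolding lines_def by (rule card_image_le) simp
  also have "\<dots> \<le> card {1..4::nat}" by (rule card_mono) auto
  finally show ?thesis by simp
qed

lemma line_weight_pos:
  assumes "L \<in> lines v p"
  shows "0 < line_weight v p L"
proof -
  obtain i where "i \<in> {1..4}" "0 < v i" "p i = L" using assms unfolding lines_def by blast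
  then show ?thesis
    unfolding line_weight_def using member_le_sum[of i "{1..4}" "\<lambda>j. if p j = L then v j else 0"] by simp
qed

lemma sum_line_weight: "(\<Sum>L\<in>lines v p. line_weight v p L) = (\<Sum>i\<in>{1..4}. v i)"
proof -
  have "(\<Sum>L\<in>lines v p. line_weight v p L) = (\<Sum>i\<in>{1..4}. \<Sum>L\<in>lines v p. if p i = L then v i else 0)"
    unfolding line_weight_def by (rule sum.swap)
  also have "\<dots> = (\<Sum>i\<in>{1..4}. v i)"
    by (rule sum.cong[OF refl]) (auto simp: sum.delta[OF finite_lines] lines_def)
  finally show ?thesis .
qed

lemma power_sum_line_weights:
  "power_sum k (line_weights v p) = (\<Sum>L\<in>lines v p. int (line_weight v p L) ^ k)"
  unfolding power_sum_def line_weights_def sum_unfold_sum_mset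
  by (simp add: of_nat_sum_mset multiset.map_comp comp_def)

lemma power_sum_1_line_weights: "power_sum 1 (line_weights v p) = int (\<Sum>i\<in>{1..4}. v i)"
  unfolding power_sum_line_weights power_one_right of_nat_sum[symmetric] sum_line_weight ..

lemma mem_line_weights_iff: "x \<in># line_weights v p \<longleftrightarrow> (\<exists>L\<in>lines v p. x = line_weight v p L)"
  unfolding line_weights_def using finite_lines[of v p] by auto

lemma card_ge_3_if_below_half:
  fixes f :: "'a \<Rightarrow> nat"
  assumes "finite S" "S \<noteq> {}" "\<And>x. x \<in> S \<Longrightarrow> 2 * f x < sum f S"
  shows "3 \<le> card S"
proof -
  have "2 * sum f S < card S * sum f S"
    using sum_bounded_above_strict[of S "\<lambda>x. 2 * f x" "sum f S"] assms by (simp add: sum_distrib_left card_gt_0_iff)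
  show ?thesis
  proof (rule ccontr)
    assume "\<not> 3 \<le> card S"
    then have "card S * sum f S \<le> 2 * sum f S" by (intro mult_le_mono1) simp
    with \<open>2 * sum f S < card S * sum f S\<close> show False by simp
  qed
qed

lemma card_image_ge_three:
  assumes "3 \<le> card (f ` B)" "B \<subseteq> {a, b, c}"
  shows "B = {a, b, c}" "distinct [f a, f b, f c]"
proof -
  have "card (f ` B) \<le> card B" using finite_subset[OF assms(2)] by (simp add: card_image_le)
  moreover have "card B \<le> card {a, b, c}" using assms(2) by (simp add: card_mono)
  moreover have "card {a, b, c} \<le> 3" by (simp add: card_insert_if)
  ultimately have "card B = card {a, b, c}" and card: "card (f ` B) = 3" using assms(1) by linarith+
  then show B: "B = {a, b, c}" using assms(2) by (simp add: card_subset_eq)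
  have "card {f a, f b, f c} = 3" using card unfolding B by simp
  then show "distinct [f a, f b, f c]" by (auto simp: card_insert_if split: if_splits)
qed

lemma line_weights_if_below_half:
  assumes "\<forall>L\<in>lines v p. 2 * line_weight v p L < (\<Sum>i\<in>{1..4}. v i)"
    and "lines v p \<noteq> {}"
  shows "3 \<le> card (lines v p)" and "size (line_weights v p) = 3 \<or> size (line_weights v p) = 4"
    and "\<forall>x\<in>#line_weights v p. 0 < x" and "\<forall>x\<in>#line_weights v p. 2 * x < \<Sum>\<^sub># (line_weights v p)"
proof -
  show three: "3 \<le> card (lines v p)"
    by (rule card_ge_3_if_below_half[OF finite_lines assms(2), of "line_weight v p"])
      (unfold sum_line_weight, rule assms(1)[rule_format])
  have "size (line_weights v p) = card (lines v p)" unfolding line_weights_def by simp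
  then show "size (line_weights v p) = 3 \<or> size (line_weights v p) = 4"
    using three card_lines_le_4[of v p] by linarith
  have "\<Sum>\<^sub># (line_weights v p) = (\<Sum>i\<in>{1..4}. v i)"
    unfolding line_weights_def sum_unfold_sum_mset[symmetric] by (rule sum_line_weight)
  moreover have "0 < x" "2 * x < (\<Sum>i\<in>{1..4}. v i)" if x: "x \<in># line_weights v p" for x
  proof -
    obtain L where L: "L \<in> lines v p" "x = line_weight v p L" using x unfolding mem_line_weights_iff by blast
    show "0 < x" "2 * x < (\<Sum>i\<in>{1..4}. v i)" using line_weight_pos[OF L(1)] bspec[OF assms(1) L(1)] L(2) by simp_all
  qed
  ultimately show "\<forall>x\<in>#line_weights v p. 0 < x" "\<forall>x\<in>#line_weights v p. 2 * x < \<Sum>\<^sub># (line_weights v p)"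
    by simp_all
qed

(* The configurations of the theorem for which the bound on c3 is attained when c1 = -1 (odd)
   and when c1 = 0 (even). *)

definition extremal_config_odd :: "(nat \<Rightarrow> nat) \<Rightarrow> (nat \<Rightarrow> 'a) \<Rightarrow> bool" where
  "extremal_config_odd v p \<longleftrightarrow>
     (\<exists>i j k l. is_ordering4 i j k l \<and> p i = p j \<and> p j \<noteq> p k \<and> p j \<noteq> p l \<and> p k \<noteq> p l
        \<and> v i \<ge> 1 \<and> v j \<ge> 1 \<and> v k = 1 \<and> v i + v j = v l)
   \<or> (\<exists>i j k l. is_ordering4 i j k l \<and> v i = 0 \<and> p j \<noteq> p k \<and> p j \<noteq> p l \<and> p k \<noteq> p l
        \<and> v j = 1 \<and> v k = v l \<and> v k \<ge> 1)"

definition extremal_config_even :: "(nat \<Rightarrow> nat) \<Rightarrow> (nat \<Rightarrow> 'a) \<Rightarrow> bool" where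
  "extremal_config_even v p \<longleftrightarrow>
     (p 1 \<noteq> p 2 \<and> p 1 \<noteq> p 3 \<and> p 1 \<noteq> p 4 \<and> p 2 \<noteq> p 3 \<and> p 2 \<noteq> p 4 \<and> p 3 \<noteq> p 4
        \<and> v 1 = 1 \<and> v 2 = 1 \<and> v 3 = 1 \<and> v 4 = 1)
   \<or> (\<exists>i j k l. is_ordering4 i j k l \<and> p i = p j \<and> p j \<noteq> p k \<and> p j \<noteq> p l \<and> p k \<noteq> p l
        \<and> v i = 1 \<and> v j = 1 \<and> v k = 2 \<and> v l = 2)
   \<or> (\<exists>i j k l. is_ordering4 i j k l \<and> v i = 0 \<and> p j \<noteq> p k \<and> p j \<noteq> p l \<and> p k \<noteq> p l
        \<and> v j = 2 \<and> v k = 2 \<and> v l = 2)"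

lemma is_ordering4_iff_distinct:
  "is_ordering4 i j k l \<longleftrightarrow> distinct [i, j, k, l] \<and> {i, j, k, l} \<subseteq> {1, 2, 3, 4}"
proof
  assume *: "distinct [i, j, k, l] \<and> {i, j, k, l} \<subseteq> {1, 2, 3, 4}"
  then have "{i, j, k, l} = {1, 2, 3, 4}"
    by (intro card_seteq) auto
  then show "is_ordering4 i j k l" using * unfolding is_ordering4_def by simp
qed (simp add: is_ordering4_def)

lemma is_ordering4_cases:
  assumes "is_ordering4 i j k l"
  shows "(i, j, k, l) \<in>
     {(1,2,3,4), (1,2,4,3), (1,3,2,4), (1,3,4,2), (1,4,2,3), (1,4,3,2),
      (2,1,3,4), (2,1,4,3), (2,3,1,4), (2,3,4,1), (2,4,1,3), (2,4,3,1),
      (3,1,2,4), (3,1,4,2), (3,2,1,4), (3,2,4,1), (3,4,1,2), (3,4,2,1),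
      (4,1,2,3), (4,1,3,2), (4,2,1,3), (4,2,3,1), (4,3,1,2), (4,3,2,1)}"
proof -
  have "distinct [i, j, k, l]" "i \<in> {1, 2, 3, 4}" "j \<in> {1, 2, 3, 4}" "k \<in> {1, 2, 3, 4}" "l \<in> {1, 2, 3, 4}"
    using assms unfolding is_ordering4_iff_distinct by auto
  then show ?thesis by (elim insertE emptyE; simp)
qed

lemma ex_is_ordering4_iff:
  "(\<exists>i j k l. is_ordering4 i j k l \<and> P i j k l) \<longleftrightarrow>
     P 1 2 3 4 \<or> P 1 2 4 3 \<or> P 1 3 2 4 \<or> P 1 3 4 2 \<or> P 1 4 2 3 \<or> P 1 4 3 2 \<or>
     P 2 1 3 4 \<or> P 2 1 4 3 \<or> P 2 3 1 4 \<or> P 2 3 4 1 \<or> P 2 4 1 3 \<or> P 2 4 3 1 \<or>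
     P 3 1 2 4 \<or> P 3 1 4 2 \<or> P 3 2 1 4 \<or> P 3 2 4 1 \<or> P 3 4 1 2 \<or> P 3 4 2 1 \<or>
     P 4 1 2 3 \<or> P 4 1 3 2 \<or> P 4 2 1 3 \<or> P 4 2 3 1 \<or> P 4 3 1 2 \<or> P 4 3 2 1"
  (is "?lhs \<longleftrightarrow> ?rhs")
proof
  assume ?lhs
  then obtain i j k l where "is_ordering4 i j k l" "P i j k l" by blast
  with is_ordering4_cases[OF this(1)] show ?rhs by auto
next
  have "is_ordering4 1 2 3 4" "is_ordering4 1 2 4 3" "is_ordering4 1 3 2 4" "is_ordering4 1 3 4 2"
    "is_ordering4 1 4 2 3" "is_ordering4 1 4 3 2" "is_ordering4 2 1 3 4" "is_ordering4 2 1 4 3"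
    "is_ordering4 2 3 1 4" "is_ordering4 2 3 4 1" "is_ordering4 2 4 1 3" "is_ordering4 2 4 3 1"
    "is_ordering4 3 1 2 4" "is_ordering4 3 1 4 2" "is_ordering4 3 2 1 4" "is_ordering4 3 2 4 1"
    "is_ordering4 3 4 1 2" "is_ordering4 3 4 2 1" "is_ordering4 4 1 2 3" "is_ordering4 4 1 3 2"
    "is_ordering4 4 2 1 3" "is_ordering4 4 2 3 1" "is_ordering4 4 3 1 2" "is_ordering4 4 3 2 1"
    by (simp_all add: is_ordering4_iff_distinct)
  then show "?rhs \<Longrightarrow> ?lhs" by blast
qed

lemma is_ordering4_set: "is_ordering4 i j k l \<Longrightarrow> {1..4} = {i, j, k, l}"
  unfolding is_ordering4_def atLeastAtMost_1_4 by (elim conjE) (rule sym)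

lemma is_ordering4_extend:
  assumes "i \<in> {1..4}" "j \<in> {1..4}" "i \<noteq> j"
  obtains k l where "is_ordering4 i j k l"
proof -
  have "card ({1..4::nat} - {i, j}) = 2" using assms by (subst card_Diff_subset) auto
  then obtain k l where kl: "{1..4} - {i, j} = {k, l}" "k \<noteq> l" by (meson card_2_iff)
  then have "{i, j, k, l} = {1..4}" using assms by blast
  moreover have "distinct [i, j, k, l]" using kl assms(3) by (simp, blast)
  ultimately have "is_ordering4 i j k l"
    unfolding is_ordering4_def atLeastAtMost_1_4 by simp
  then show thesis by (rule that)
qed

lemma is_ordering4_permutation:
  assumes "is_ordering4 i j k l"
  obtains \<sigma> where "\<sigma> permutes {1..4}" "\<sigma> 1 = i" "\<sigma> 2 = j" "\<sigma> 3 = k" "\<sigma> 4 = l"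
proof -
  define \<sigma> where "\<sigma> x = (if x = 1 then i else if x = 2 then j else if x = 3 then k else if x = 4 then l else x)"
    for x :: nat
  have "\<sigma> ` {1, 2, 3, 4} = {i, j, k, l}" by (simp add: \<sigma>_def, blast)
  moreover have "inj_on \<sigma> {1, 2, 3, 4}"
    using assms unfolding is_ordering4_def by (simp add: \<sigma>_def)
  ultimately have "bij_betw \<sigma> {1..4} {1..4}"
    using assms unfolding bij_betw_def is_ordering4_def atLeastAtMost_1_4 by simp
  then have "\<sigma> permutes {1..4}"
    by (rule bij_imp_permutes) (unfold atLeastAtMost_1_4 \<sigma>_def, auto)
  then show thesis by (rule that) (simp_all add: \<sigma>_def)
qed

lemma is_ordering4_relabel:
  assumes "\<sigma> permutes {1..4}" "is_ordering4 i j k l"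
  shows "is_ordering4 (\<sigma> i) (\<sigma> j) (\<sigma> k) (\<sigma> l)"
proof -
  have set: "set [i, j, k, l] = {1..4}" and "distinct [i, j, k, l]"
    using assms(2) unfolding is_ordering4_def atLeastAtMost_1_4 by auto
  then have "distinct (map \<sigma> [i, j, k, l])"
    using permutes_inj_on[OF assms(1)] by (simp only: distinct_map set)
  moreover have "set (map \<sigma> [i, j, k, l]) = {1..4}"
    using permutes_image[OF assms(1)] by (simp only: set_map set)
  ultimately show ?thesis unfolding is_ordering4_def atLeastAtMost_1_4 by simp
qed

lemma ex_is_ordering4_relabel:
  assumes "\<sigma> permutes {1..4}" "\<exists>i j k l. is_ordering4 i j k l \<and> P i j k l"
  shows "\<exists>i j k l. is_ordering4 i j k l \<and> P (\<sigma> i) (\<sigma> j) (\<sigma> k) (\<sigma> l)"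
proof -
  obtain i j k l where "is_ordering4 i j k l" "P i j k l" using assms(2) by blast
  moreover have "\<sigma> (inv \<sigma> x) = x" for x using permutes_inverses(1)[OF assms(1)] .
  ultimately show ?thesis
    using is_ordering4_relabel[OF permutes_inv[OF assms(1)]] by metis
qed

lemma permutes_image_Collect:
  assumes "\<sigma> permutes S"
  shows "\<sigma> ` {i \<in> S. P (\<sigma> i)} = {i \<in> S. P i}"
  using permutes_image[OF assms] by auto

lemma lines_relabel:
  assumes "\<sigma> permutes {1..4}"
  shows "lines (v \<circ> \<sigma>) (p \<circ> \<sigma>) = lines v p"
proof -
  have "(p \<circ> \<sigma>) ` {i \<in> {1..4}. 0 < (v \<circ> \<sigma>) i} = p ` \<sigma> ` {i \<in> {1..4}. 0 < v (\<sigma> i)}"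
    by (simp add: image_comp)
  then show ?thesis
    unfolding lines_def permutes_image_Collect[OF assms, of "\<lambda>i. 0 < v i"] .
qed

lemma line_weight_relabel:
  assumes "\<sigma> permutes {1..4}"
  shows "line_weight (v \<circ> \<sigma>) (p \<circ> \<sigma>) = line_weight v p"
proof
  fix L
  show "line_weight (v \<circ> \<sigma>) (p \<circ> \<sigma>) L = line_weight v p L"
    unfolding line_weight_def by (subst (2) sum.permute[OF assms]) (simp only: comp_def)
qed

lemma line_weights_relabel:
  assumes "\<sigma> permutes {1..4}"
  shows "line_weights (v \<circ> \<sigma>) (p \<circ> \<sigma>) = line_weights v p"
  unfolding line_weights_def lines_relabel[OF assms] line_weight_relabel[OF assms] ..

lemma relabel_invariant:
  assumes imp: "\<And>\<sigma> v p. \<sigma> permutes S \<Longrightarrow> P v p \<Longrightarrow> P (v \<circ> \<sigma>) (p \<circ> \<sigma>)"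
    and \<sigma>: "\<sigma> permutes S"
  shows "P (v \<circ> \<sigma>) (p \<circ> \<sigma>) \<longleftrightarrow> P v p"
  using imp[OF \<sigma>] imp[OF permutes_inv[OF \<sigma>], of "v \<circ> \<sigma>" "p \<circ> \<sigma>"]
  by (auto simp: comp_assoc permutes_inv_o[OF \<sigma>])

lemma extremal_config_odd_relabel_imp:
  assumes "\<sigma> permutes {1..4}" "extremal_config_odd v p"
  shows "extremal_config_odd (v \<circ> \<sigma>) (p \<circ> \<sigma>)"
  using assms(2) unfolding extremal_config_odd_def[of v p]
proof (elim disjE)
  assume "\<exists>i j k l. is_ordering4 i j k l \<and> p i = p j \<and> p j \<noteq> p k \<and> p j \<noteq> p l \<and> p k \<noteq> p l
        \<and> v i \<ge> 1 \<and> v j \<ge> 1 \<and> v k = 1 \<and> v i + v j = v l"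
  from ex_is_ordering4_relabel[OF assms(1) this] show ?thesis
    unfolding extremal_config_odd_def comp_apply by blast
next
  assume "\<exists>i j k l. is_ordering4 i j k l \<and> v i = 0 \<and> p j \<noteq> p k \<and> p j \<noteq> p l \<and> p k \<noteq> p l
        \<and> v j = 1 \<and> v k = v l \<and> v k \<ge> 1"
  from ex_is_ordering4_relabel[OF assms(1) this] show ?thesis
    unfolding extremal_config_odd_def comp_apply by blast
qed

lemma extremal_config_even_relabel_imp:
  assumes \<sigma>: "\<sigma> permutes {1..4}" and "extremal_config_even v p"
  shows "extremal_config_even (v \<circ> \<sigma>) (p \<circ> \<sigma>)"
  using assms(2) unfolding extremal_config_even_def[of v p]
proof (elim disjE)
  have distinct_units: "(f 1 \<noteq> f 2 \<and> f 1 \<noteq> f 3 \<and> f 1 \<noteq> f 4 \<and> f 2 \<noteq> f 3 \<and> f 2 \<noteq> f 4 \<and> f 3 \<noteq> f 4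
      \<and> g 1 = 1 \<and> g 2 = 1 \<and> g 3 = 1 \<and> g 4 = 1) \<longleftrightarrow> inj_on f {1..4} \<and> (\<forall>i\<in>{1..4}. g i = (1::nat))"
    for f :: "nat \<Rightarrow> 'a" and g :: "nat \<Rightarrow> nat"
    unfolding atLeastAtMost_1_4 by auto
  have "inj_on (p \<circ> \<sigma>) {1..4} \<longleftrightarrow> inj_on p {1..4}"
    using comp_inj_on_iff[OF permutes_inj_on[OF \<sigma>]] permutes_image[OF \<sigma>] by metis
  moreover have "(\<forall>i\<in>{1..4}. (v \<circ> \<sigma>) i = 1) \<longleftrightarrow> (\<forall>i\<in>{1..4}. v i = 1)"
    using permutes_image[OF \<sigma>] by (metis (no_types, lifting) comp_apply imageE imageI)
  moreover assume "p 1 \<noteq> p 2 \<and> p 1 \<noteq> p 3 \<and> p 1 \<noteq> p 4 \<and> p 2 \<noteq> p 3 \<and> p 2 \<noteq> p 4 \<and> p 3 \<noteq> p 4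
        \<and> v 1 = 1 \<and> v 2 = 1 \<and> v 3 = 1 \<and> v 4 = 1"
  ultimately show ?thesis
    unfolding extremal_config_even_def distinct_units by blast
next
  assume "\<exists>i j k l. is_ordering4 i j k l \<and> p i = p j \<and> p j \<noteq> p k \<and> p j \<noteq> p l \<and> p k \<noteq> p l
        \<and> v i = 1 \<and> v j = 1 \<and> v k = 2 \<and> v l = 2"
  from ex_is_ordering4_relabel[OF \<sigma> this] show ?thesis
    unfolding extremal_config_even_def comp_apply by blast
next
  assume "\<exists>i j k l. is_ordering4 i j k l \<and> v i = 0 \<and> p j \<noteq> p k \<and> p j \<noteq> p l \<and> p k \<noteq> p l
        \<and> v j = 2 \<and> v k = 2 \<and> v l = 2"
  from ex_is_ordering4_relabel[OF \<sigma> this] show ?thesis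
    unfolding extremal_config_even_def comp_apply by blast
qed

lemma extremal_config_odd_relabel:
  "\<sigma> permutes {1..4} \<Longrightarrow> extremal_config_odd (v \<circ> \<sigma>) (p \<circ> \<sigma>) \<longleftrightarrow> extremal_config_odd v p"
  by (rule relabel_invariant[where P = extremal_config_odd, OF extremal_config_odd_relabel_imp])

lemma extremal_config_even_relabel:
  "\<sigma> permutes {1..4} \<Longrightarrow> extremal_config_even (v \<circ> \<sigma>) (p \<circ> \<sigma>) \<longleftrightarrow> extremal_config_even v p"
  by (rule relabel_invariant[where P = extremal_config_even, OF extremal_config_even_relabel_imp])

lemma three_lines_vanishing:
  assumes "is_ordering4 i j k l" "v i = 0" "3 \<le> card (lines v p)"
  shows "0 < v j" "0 < v k" "0 < v l" "distinct [p j, p k, p l]"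
proof -
  define B where "B = {x \<in> {j, k, l}. 0 < v x}"
  have "{x \<in> {1..4}. 0 < v x} = B"
    using is_ordering4_set[OF assms(1)] assms(2) unfolding B_def by auto
  then have "3 \<le> card (p ` B)" "B \<subseteq> {j, k, l}" using assms(3) by (auto simp: lines_def B_def)
  note card_image_ge_three[OF this]
  moreover from this have "j \<in> B" "k \<in> B" "l \<in> B" by auto
  ultimately show "0 < v j" "0 < v k" "0 < v l" "distinct [p j, p k, p l]" unfolding B_def by auto
qed

lemma three_lines_coincident:
  assumes "is_ordering4 i j k l" "\<forall>x\<in>{1..4}. 0 < v x" "p i = p j" "3 \<le> card (lines v p)"
  shows "distinct [p j, p k, p l]"
proof -
  have "{x \<in> {1..4}. 0 < v x} = {i, j, k, l}" using is_ordering4_set[OF assms(1)] assms(2) by blast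
  then have "lines v p = p ` {j, k, l}" using assms(3) unfolding lines_def by simp
  then have "3 \<le> card (p ` {j, k, l})" using assms(4) by simp
  then show ?thesis by (rule card_image_ge_three(2)) simp
qed

lemma three_lines_normal_form:
  assumes "3 \<le> card (lines v p)"
  obtains (vanishing) \<sigma> where "\<sigma> permutes {1..4}" "v (\<sigma> 1) = 0"
      "0 < v (\<sigma> 2)" "0 < v (\<sigma> 3)" "0 < v (\<sigma> 4)" "distinct [p (\<sigma> 2), p (\<sigma> 3), p (\<sigma> 4)]"
  | (coincident) \<sigma> where "\<sigma> permutes {1..4}" "0 < v (\<sigma> 1)" "0 < v (\<sigma> 2)"
      "0 < v (\<sigma> 3)" "0 < v (\<sigma> 4)" "p (\<sigma> 1) = p (\<sigma> 2)" "distinct [p (\<sigma> 2), p (\<sigma> 3), p (\<sigma> 4)]"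
  | (generic) "0 < v 1" "0 < v 2" "0 < v 3" "0 < v 4" "distinct [p 1, p 2, p 3, p 4]"
proof -
  consider (zero) i where "i \<in> {1..4}" "v i = 0"
    | (collision) i j where "\<forall>x\<in>{1..4}. 0 < v x" "i \<in> {1..4}" "j \<in> {1..4}" "i \<noteq> j" "p i = p j"
    | (injective) "\<forall>x\<in>{1..4}. 0 < v x" "inj_on p {1..4}"
    unfolding inj_on_def by blast
  then show thesis
  proof cases
    case (zero i)
    obtain j where "j \<in> {1..4}" "i \<noteq> j" using zero(1) by (cases "i = 1") (auto intro: that[of 1] that[of 2])
    then obtain k l where ord: "is_ordering4 i j k l" using is_ordering4_extend zero(1) by metis
    moreover obtain \<sigma> where "\<sigma> permutes {1..4}" "\<sigma> 1 = i" "\<sigma> 2 = j" "\<sigma> 3 = k" "\<sigma> 4 = l"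
      using is_ordering4_permutation ord by metis
    ultimately show thesis using vanishing three_lines_vanishing[OF ord zero(2) assms] zero(2) by simp
  next
    case (collision i j)
    then obtain k l where ord: "is_ordering4 i j k l" using is_ordering4_extend by metis
    moreover obtain \<sigma> where "\<sigma> permutes {1..4}" "\<sigma> 1 = i" "\<sigma> 2 = j" "\<sigma> 3 = k" "\<sigma> 4 = l"
      using is_ordering4_permutation ord by metis
    moreover have "0 < v k" "0 < v l" using ord collision(1) unfolding is_ordering4_def atLeastAtMost_1_4 by auto
    ultimately show thesis
      using coincident three_lines_coincident[OF ord collision(1,5) assms] collision by simp
  next
    case injective
    have "inj_on p (set [1, 2, 3, 4])" using injective(2) unfolding atLeastAtMost_1_4 by simp
    then have "distinct (map p [1, 2, 3, 4])" by (subst distinct_map) simp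
    then show thesis using generic injective(1) by simp
  qed
qed

lemma normal_config_vanishing:
  assumes "v 1 = 0" "0 < v 2" "0 < v 3" "0 < v 4" "distinct [p 2, p 3, p 4]"
  shows "line_weights v p = {#v 2, v 3, v 4#}"
    and "extremal_config_odd v p \<longleftrightarrow> (v 2 = 1 \<and> v 3 = v 4) \<or> (v 3 = 1 \<and> v 2 = v 4) \<or> (v 4 = 1 \<and> v 2 = v 3)"
    and "extremal_config_even v p \<longleftrightarrow> v 2 = 2 \<and> v 3 = 2 \<and> v 4 = 2"
proof -
  have ne: "p 2 \<noteq> p 3" "p 3 \<noteq> p 2" "p 2 \<noteq> p 4" "p 4 \<noteq> p 2" "p 3 \<noteq> p 4" "p 4 \<noteq> p 3"
    and pos: "v 2 \<noteq> 0" "v 3 \<noteq> 0" "v 4 \<noteq> 0" "1 \<le> v 2" "1 \<le> v 3" "1 \<le> v 4"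
    using assms(2-5) by auto
  have "{x \<in> {1..4}. 0 < v x} = {2, 3, 4}" unfolding atLeastAtMost_1_4 using assms(1-4) by auto
  then have "lines v p = set [p 2, p 3, p 4]" unfolding lines_def by simp
  moreover have "line_weight v p (p 2) = v 2" "line_weight v p (p 3) = v 3" "line_weight v p (p 4) = v 4"
    using assms(1) ne unfolding line_weight_def sum_1_4 by simp_all
  ultimately show "line_weights v p = {#v 2, v 3, v 4#}"
    using assms(5) unfolding line_weights_def by (simp add: mset_set_set)
  show "extremal_config_odd v p \<longleftrightarrow> (v 2 = 1 \<and> v 3 = v 4) \<or> (v 3 = 1 \<and> v 2 = v 4) \<or> (v 4 = 1 \<and> v 2 = v 3)"
    using assms(1) ne pos unfolding extremal_config_odd_def ex_is_ordering4_iff by simp metis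
  show "extremal_config_even v p \<longleftrightarrow> v 2 = 2 \<and> v 3 = 2 \<and> v 4 = 2"
    using assms(1) ne pos unfolding extremal_config_even_def ex_is_ordering4_iff by simp blast
qed

lemma normal_config_coincident:
  assumes "0 < v 1" "0 < v 2" "0 < v 3" "0 < v 4" "p 1 = p 2" "distinct [p 2, p 3, p 4]"
  shows "line_weights v p = {#v 1 + v 2, v 3, v 4#}"
    and "extremal_config_odd v p \<longleftrightarrow> (v 3 = 1 \<and> v 1 + v 2 = v 4) \<or> (v 4 = 1 \<and> v 1 + v 2 = v 3)"
    and "extremal_config_even v p \<longleftrightarrow> v 1 = 1 \<and> v 2 = 1 \<and> v 3 = 2 \<and> v 4 = 2"
proof -
  have ne: "p 2 \<noteq> p 3" "p 3 \<noteq> p 2" "p 2 \<noteq> p 4" "p 4 \<noteq> p 2" "p 3 \<noteq> p 4" "p 4 \<noteq> p 3"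
    and pos: "v 1 \<noteq> 0" "v 2 \<noteq> 0" "v 3 \<noteq> 0" "v 4 \<noteq> 0" "1 \<le> v 1" "1 \<le> v 2" "1 \<le> v 3" "1 \<le> v 4"
    using assms(1-4,6) by auto
  have "{x \<in> {1..4}. 0 < v x} = {1, 2, 3, 4}" unfolding atLeastAtMost_1_4 using assms(1-4) by auto
  then have "lines v p = set [p 2, p 3, p 4]" unfolding lines_def using assms(5) by auto
  moreover have "line_weight v p (p 2) = v 1 + v 2" "line_weight v p (p 3) = v 3" "line_weight v p (p 4) = v 4"
    using assms(5) ne unfolding line_weight_def sum_1_4 by simp_all
  ultimately show "line_weights v p = {#v 1 + v 2, v 3, v 4#}"
    using assms(6) unfolding line_weights_def by (simp add: mset_set_set)
  show "extremal_config_odd v p \<longleftrightarrow> (v 3 = 1 \<and> v 1 + v 2 = v 4) \<or> (v 4 = 1 \<and> v 1 + v 2 = v 3)"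
    using assms(5) ne pos unfolding extremal_config_odd_def ex_is_ordering4_iff by simp (auto simp: add.commute)
  show "extremal_config_even v p \<longleftrightarrow> v 1 = 1 \<and> v 2 = 1 \<and> v 3 = 2 \<and> v 4 = 2"
    using assms(5) ne pos unfolding extremal_config_even_def ex_is_ordering4_iff by simp blast
qed

lemma normal_config_generic:
  assumes "0 < v 1" "0 < v 2" "0 < v 3" "0 < v 4" "distinct [p 1, p 2, p 3, p 4]"
  shows "line_weights v p = {#v 1, v 2, v 3, v 4#}"
    and "\<not> extremal_config_odd v p"
    and "extremal_config_even v p \<longleftrightarrow> v 1 = 1 \<and> v 2 = 1 \<and> v 3 = 1 \<and> v 4 = 1"
proof -
  have ne: "p 1 \<noteq> p 2" "p 2 \<noteq> p 1" "p 1 \<noteq> p 3" "p 3 \<noteq> p 1" "p 1 \<noteq> p 4" "p 4 \<noteq> p 1"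
      "p 2 \<noteq> p 3" "p 3 \<noteq> p 2" "p 2 \<noteq> p 4" "p 4 \<noteq> p 2" "p 3 \<noteq> p 4" "p 4 \<noteq> p 3"
    and pos: "v 1 \<noteq> 0" "v 2 \<noteq> 0" "v 3 \<noteq> 0" "v 4 \<noteq> 0"
    using assms by auto
  have "{x \<in> {1..4}. 0 < v x} = {1, 2, 3, 4}" unfolding atLeastAtMost_1_4 using assms(1-4) by auto
  then have "lines v p = set [p 1, p 2, p 3, p 4]" unfolding lines_def by simp
  moreover have "line_weight v p (p 1) = v 1" "line_weight v p (p 2) = v 2"
    "line_weight v p (p 3) = v 3" "line_weight v p (p 4) = v 4"
    using ne unfolding line_weight_def sum_1_4 by simp_all
  ultimately show "line_weights v p = {#v 1, v 2, v 3, v 4#}"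
    using assms(5) unfolding line_weights_def by (simp add: mset_set_set)
  show "\<not> extremal_config_odd v p"
    using ne pos unfolding extremal_config_odd_def ex_is_ordering4_iff by simp
  show "extremal_config_even v p \<longleftrightarrow> v 1 = 1 \<and> v 2 = 1 \<and> v 3 = 1 \<and> v 4 = 1"
    using ne pos unfolding extremal_config_even_def ex_is_ordering4_iff by simp
qed

lemma extremal_configs_iff_line_weights:
  assumes "3 \<le> card (lines v p)"
  shows "extremal_config_odd v p \<longleftrightarrow> (\<exists>b. line_weights v p = {#1, b, b#})"
    and "extremal_config_even v p \<longleftrightarrow> line_weights v p = {#1, 1, 1, 1#} \<or> line_weights v p = {#2, 2, 2#}"
proof -
  have "(extremal_config_odd v p \<longleftrightarrow> (\<exists>b. line_weights v p = {#1, b, b#}))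
    \<and> (extremal_config_even v p \<longleftrightarrow> line_weights v p = {#1, 1, 1, 1#} \<or> line_weights v p = {#2, 2, 2#})"
    using assms
  proof (cases rule: three_lines_normal_form)
    case (vanishing \<sigma>)
    note relabel = line_weights_relabel[OF vanishing(1)] extremal_config_odd_relabel[OF vanishing(1)]
      extremal_config_even_relabel[OF vanishing(1)]
    note config = normal_config_vanishing[of "v \<circ> \<sigma>" "p \<circ> \<sigma>", unfolded relabel comp_apply, OF vanishing(2-)]
    show ?thesis
      unfolding config mset3_eq_1bb_iff mset3_eq_222_iff by (simp add: mset3_ne_mset4)
  next
    case (coincident \<sigma>)
    note relabel = line_weights_relabel[OF coincident(1)] extremal_config_odd_relabel[OF coincident(1)]
      extremal_config_even_relabel[OF coincident(1)]
    note config = normal_config_coincident[of "v \<circ> \<sigma>" "p \<circ> \<sigma>", unfolded relabel comp_apply, OF coincident(2-)]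
    show ?thesis
      unfolding config mset3_eq_1bb_iff mset3_eq_222_iff using coincident(2,3) by (auto simp: mset3_ne_mset4)
  next
    case generic
    note config = normal_config_generic[OF generic]
    show ?thesis
      unfolding config mset4_eq_1111_iff using config(2) by (simp add: mset3_ne_mset4)
  qed
  then show "extremal_config_odd v p \<longleftrightarrow> (\<exists>b. line_weights v p = {#1, b, b#})"
    and "extremal_config_even v p \<longleftrightarrow> line_weights v p = {#1, 1, 1, 1#} \<or> line_weights v p = {#2, 2, 2#}"
    by blast+
qed

section \<open>Lines in the plane\<close>

lemma czero_in_cline: "czero \<in> cline w"
  unfolding cline_def czero_def by (auto intro: exI[of _ 0])

lemma in_cline_self: "w \<in> cline w"
  unfolding cline_def by (auto intro: exI[of _ 1])

lemma cline_scale: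
  assumes "c \<noteq> 0"
  shows "cline (c * fst w, c * snd w) = cline w"
proof (intro set_eqI iffI)
  fix x assume "x \<in> cline (c * fst w, c * snd w)"
  then obtain d where "x = (d * (c * fst w), d * (c * snd w))" unfolding cline_def by auto
  then show "x \<in> cline w" unfolding cline_def by (auto simp: mult.assoc intro!: exI[of _ "d * c"])
next
  fix x assume "x \<in> cline w"
  then obtain d where "x = (d * fst w, d * snd w)" unfolding cline_def by auto
  then show "x \<in> cline (c * fst w, c * snd w)"
    unfolding cline_def using assms by (auto intro!: exI[of _ "d / c"])
qed

lemma cline_ne_UNIV: "cline w \<noteq> UNIV"
proof
  assume "cline w = UNIV"
  then have "(1, 0) \<in> cline w" "(0, 1) \<in> cline w" by simp_all
  then obtain c d where "(1, 0) = (c * fst w, c * snd w)" "(0, 1) = (d * fst w, d * snd w)"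
    unfolding cline_def by blast
  then show False by (metis mult_eq_0_iff prod.inject zero_neq_one)
qed

lemma czero_ne_UNIV: "{czero} \<noteq> UNIV"
  unfolding czero_def by (metis UNIV_I prod.inject singletonD zero_neq_one)

lemma P1_point_czero: "is_P1_point L \<Longrightarrow> czero \<in> L"
  unfolding is_P1_point_def using czero_in_cline by blast

lemma P1_point_ne_zero: "is_P1_point L \<Longrightarrow> L \<noteq> {czero}"
  unfolding is_P1_point_def using in_cline_self by fastforce

lemma P1_point_ne_UNIV: "is_P1_point L \<Longrightarrow> L \<noteq> UNIV"
  unfolding is_P1_point_def using cline_ne_UNIV by blast

lemma P1_point_cline_1_0: "is_P1_point (cline (1, 0))"
  unfolding is_P1_point_def czero_def by (rule exI[of _ "(1, 0)"]) simp

lemma P1_points_eqI: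
  assumes "is_P1_point L" "is_P1_point L'" "x \<in> L" "x \<in> L'" "x \<noteq> czero"
  shows "L = L'"
proof -
  have "L = cline x" if L: "is_P1_point L" "x \<in> L" for L
  proof -
    obtain w where "L = cline w" using L(1) unfolding is_P1_point_def by blast
    moreover obtain c where "x = (c * fst w, c * snd w)" using L(2) calculation unfolding cline_def by blast
    moreover have "c \<noteq> 0" using calculation(2) assms(5) unfolding czero_def by auto
    ultimately show ?thesis using cline_scale by metis
  qed
  then show ?thesis using assms by metis
qed

lemma P1_points_Int: "is_P1_point L \<Longrightarrow> is_P1_point L' \<Longrightarrow> L \<noteq> L' \<Longrightarrow> L \<inter> L' = {czero}"
  using P1_points_eqI P1_point_czero by blast

lemma P1_points_subset_iff: "is_P1_point L \<Longrightarrow> is_P1_point L' \<Longrightarrow> L \<subseteq> L' \<longleftrightarrow> L = L'"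
  using P1_points_eqI P1_point_ne_zero P1_point_czero by blast

lemma P1_point_meet_iff_subset:
  assumes W: "is_P1_point W" and X: "X \<in> insert {czero} (insert UNIV S)" "\<forall>L\<in>S. is_P1_point L"
  shows "W \<inter> X \<noteq> {czero} \<longleftrightarrow> W \<subseteq> X"
proof -
  consider "X = {czero}" | "X = UNIV" | "is_P1_point X" using X by blast
  then show ?thesis
  proof cases
    case 1
    then show ?thesis using P1_point_ne_zero[OF W] P1_point_czero[OF W] by blast
  next
    case 2
    then show ?thesis using P1_point_ne_zero[OF W] by simp
  next
    case 3
    then show ?thesis
      using P1_points_Int[OF W] P1_points_subset_iff[OF W] P1_point_ne_zero[OF W] by (cases "W = X") auto
  qed
qed

lemma Int_P1_family:
  assumes S: "\<forall>L\<in>S. is_P1_point L"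
    and X: "X \<in> insert {czero} (insert UNIV S)" and Y: "Y \<in> insert {czero} (insert UNIV S)"
  shows "X \<inter> Y \<in> insert {czero} (insert UNIV S)"
proof -
  have "czero \<in> X" "czero \<in> Y" using X Y S P1_point_czero by blast+
  then show ?thesis
    using X Y S P1_points_Int by (cases "X = Y") (auto simp: Int_absorb1 Int_absorb2)
qed

lemma cdim_eq_count_lines:
  assumes S: "finite S" "\<forall>L\<in>S. is_P1_point L" and X: "X \<in> insert {czero} (insert UNIV S)"
  shows "int (cdim X) = (\<Sum>L\<in>S. of_bool (L \<subseteq> X)) - (int (card S) - 2) * of_bool (X = UNIV)"
proof -
  consider "X = {czero}" | "X = UNIV" | "X \<in> S" "X \<noteq> UNIV" "X \<noteq> {czero}" using X by blast
  then show ?thesis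
  proof cases
    case 1
    then have "S \<inter> {L. L \<subseteq> X} = {}" using S P1_point_ne_zero P1_point_czero by blast
    then show ?thesis using 1 S(1) czero_ne_UNIV unfolding cdim_def by simp
  next
    case 2
    then show ?thesis using S(1) czero_ne_UNIV unfolding cdim_def by simp
  next
    case 3
    then have "S \<inter> {L. L \<subseteq> X} = {X}" using S P1_points_subset_iff by blast
    then show ?thesis using 3 S(1) unfolding cdim_def by simp
  qed
qed

section \<open>Lattice simplices\<close>

definition lattice_simplex :: "(nat \<Rightarrow> int) \<Rightarrow> (int \<times> int \<times> int) set" where
  "lattice_simplex a = {m. \<forall>i\<in>{1..4}. a i \<le> pairing m i}"

lemma length_4_conv: "length xs = 4 \<longleftrightarrow> (\<exists>x0 x1 x2 x3. xs = [x0, x1, x2, x3])"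
  by (auto simp: numeral_eq_Suc length_Suc_conv)

lemma card_lattice_simplex:
  assumes "(\<Sum>i\<in>{1..4}. a i) + int n = 0"
  shows "finite (lattice_simplex a)" and "card (lattice_simplex a) = (n + 3) choose 3"
proof -
  \<comment> \<open>m corresponds to the composition of n into the four parts \<open>\<langle>m, n\<^sub>i\<rangle> - a\<^sub>i\<close>\<close>
  define g where "g xs = (int (xs ! 0) + a 1, int (xs ! 1) + a 2, int (xs ! 2) + a 3)" for xs :: "nat list"
  define Xs where "Xs = {xs :: nat list. length xs = 4 \<and> sum_list xs = n}"
  have n: "int n = - (a 1 + a 2 + a 3 + a 4)" using assms unfolding sum_1_4 by simp
  have "lattice_simplex a = g ` Xs"
  proof (intro set_eqI iffI)
    fix m assume "m \<in> lattice_simplex a"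
    then obtain m1 m2 m3 where m: "m = (m1, m2, m3)" "a 1 \<le> m1" "a 2 \<le> m2" "a 3 \<le> m3" "a 4 \<le> - m1 - m2 - m3"
      unfolding lattice_simplex_def atLeastAtMost_1_4 pairing_def by (cases m) auto
    let ?xs = "[nat (m1 - a 1), nat (m2 - a 2), nat (m3 - a 3), nat (- m1 - m2 - m3 - a 4)]"
    have "?xs \<in> Xs" using m n unfolding Xs_def by (simp add: nat_add_distrib[symmetric])
    moreover have "m = g ?xs" using m unfolding g_def by simp
    ultimately show "m \<in> g ` Xs" by blast
  next
    fix m assume "m \<in> g ` Xs"
    then obtain x0 x1 x2 x3 where "m = g [x0, x1, x2, x3]" "x0 + x1 + x2 + x3 = n"
      unfolding Xs_def length_4_conv by auto
    then show "m \<in> lattice_simplex a"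
      unfolding lattice_simplex_def atLeastAtMost_1_4 pairing_def g_def using n by auto
  qed
  moreover have "inj_on g Xs"
    unfolding inj_on_def Xs_def length_4_conv g_def by auto
  moreover have "card Xs = (n + 3) choose 3"
    using card_length_sum_list[of 4 n] binomial_symmetric[of 3 "n + 3"] unfolding Xs_def by (simp add: add.commute)
  moreover have "finite Xs"
    by (rule card_ge_0_finite) (simp add: \<open>card Xs = (n + 3) choose 3\<close>)
  ultimately show "finite (lattice_simplex a)" "card (lattice_simplex a) = (n + 3) choose 3"
    by (simp_all add: card_image)
qed

lemma lattice_simplex_antimono: "(\<And>i. i \<in> {1..4} \<Longrightarrow> a i \<le> b i) \<Longrightarrow> lattice_simplex b \<subseteq> lattice_simplex a"
  unfolding lattice_simplex_def by force

section \<open>Sections of a toric sheaf\<close>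

lemma toric_data_filtration:
  "toric_data F u v p \<Longrightarrow> i \<in> {1..4} \<Longrightarrow>
    F i l = (if l < u i then {czero} else if l < u i + int (v i) then p i else UNIV)"
  unfolding toric_data_def by blast

lemma toric_data_lines_P1_point: "toric_data F u v p \<Longrightarrow> L \<in> lines v p \<Longrightarrow> is_P1_point L"
  unfolding toric_data_def lines_def by blast

lemma toric_data_filtration_cases:
  assumes "toric_data F u v p" "i \<in> {1..4}"
  shows "F i l \<in> insert {czero} (insert UNIV (lines v p))"
proof (cases "u i \<le> l \<and> l < u i + int (v i)")
  case True
  then have "p i \<in> lines v p" using assms(2) unfolding lines_def by auto
  then show ?thesis using toric_data_filtration[OF assms, of l] True by simp
next
  case False
  then show ?thesis using toric_data_filtration[OF assms, of l] by auto
qed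

definition entry_index :: "(nat \<Rightarrow> int) \<Rightarrow> (nat \<Rightarrow> nat) \<Rightarrow> (nat \<Rightarrow> 'a) \<Rightarrow> 'a \<Rightarrow> nat \<Rightarrow> int" where
  "entry_index u v p L i = u i + int (if p i = L then 0 else v i)"

lemma sum_entry_index:
  "(\<Sum>i\<in>{1..4}. entry_index u v p L i) = (\<Sum>i\<in>{1..4}. u i) + int (\<Sum>i\<in>{1..4}. v i) - int (line_weight v p L)"
  unfolding entry_index_def line_weight_def sum_1_4 by simp

lemma toric_filtration_subset_iff:
  assumes td: "toric_data F u v p" and i: "i \<in> {1..4}" and W: "is_P1_point W"
  shows "W \<subseteq> F i l \<longleftrightarrow> entry_index u v p W i \<le> l"
proof -
  consider "l < u i" | "u i \<le> l" "l < u i + int (v i)" | "u i + int (v i) \<le> l" by linarith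
  then show ?thesis
  proof cases
    case 1
    moreover have "\<not> W \<subseteq> {czero}" using P1_point_ne_zero[OF W] P1_point_czero[OF W] by blast
    ultimately show ?thesis using toric_data_filtration[OF td i, of l] unfolding entry_index_def by simp
  next
    case 2
    moreover have "W \<subseteq> p i \<longleftrightarrow> p i = W"
      using P1_points_subset_iff[OF W] td i 2 unfolding toric_data_def by auto
    ultimately show ?thesis using toric_data_filtration[OF td i, of l] unfolding entry_index_def by auto
  next
    case 3
    then show ?thesis using toric_data_filtration[OF td i, of l] unfolding entry_index_def by simp
  qed
qed

lemma toric_filtration_meet_iff:
  assumes td: "toric_data F u v p" and i: "i \<in> {1..4}" and W: "is_P1_point W"
  shows "W \<inter> F i l \<noteq> {czero} \<longleftrightarrow> entry_index u v p W i \<le> l"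
  using P1_point_meet_iff_subset[OF W toric_data_filtration_cases[OF td i]]
    toric_data_lines_P1_point[OF td] toric_filtration_subset_iff[OF td i W] by blast

lemma toric_filtration_eq_UNIV_iff:
  assumes td: "toric_data F u v p" and i: "i \<in> {1..4}"
  shows "F i l = UNIV \<longleftrightarrow> u i + int (v i) \<le> l"
proof -
  have "p i \<noteq> UNIV" if "0 < v i"
    using P1_point_ne_UNIV td i that unfolding toric_data_def by blast
  then show ?thesis using toric_data_filtration[OF td i, of l] czero_ne_UNIV by auto
qed

definition sections :: "(nat \<Rightarrow> int \<Rightarrow> vec2 set) \<Rightarrow> int \<times> int \<times> int \<Rightarrow> vec2 set" where
  "sections F m = (\<Inter>i\<in>{1..4}. F i (pairing m i))"

lemma sections_in_family:
  assumes td: "toric_data F u v p"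
  shows "sections F m \<in> insert {czero} (insert UNIV (lines v p))"
proof -
  have "sections F m = F 1 (pairing m 1) \<inter> (F 2 (pairing m 2) \<inter> (F 3 (pairing m 3) \<inter> F 4 (pairing m 4)))"
    unfolding sections_def atLeastAtMost_1_4 by simp
  moreover have "\<forall>L\<in>lines v p. is_P1_point L" using toric_data_lines_P1_point[OF td] by blast
  ultimately show ?thesis
    by (simp only:) (intro Int_P1_family toric_data_filtration_cases[OF td]; simp)
qed

lemma toric_sections_eq_zero:
  assumes td: "toric_data F u v p" and m: "m \<notin> lattice_simplex u"
  shows "sections F m = {czero}"
proof -
  obtain i where i: "i \<in> {1..4}" "pairing m i < u i" using m unfolding lattice_simplex_def by auto
  have "czero \<in> F j l" if "j \<in> {1..4}" for j l
    using toric_data_filtration_cases[OF td that] P1_point_czero toric_data_lines_P1_point[OF td] by blast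
  moreover have "F i (pairing m i) = {czero}" using toric_data_filtration[OF td i(1)] i(2) by simp
  ultimately show ?thesis unfolding sections_def using i(1) by blast
qed

lemma toric_sections_subset_iff:
  assumes td: "toric_data F u v p" and L: "is_P1_point L"
  shows "L \<subseteq> sections F m \<longleftrightarrow> m \<in> lattice_simplex (entry_index u v p L)"
  unfolding sections_def lattice_simplex_def using toric_filtration_subset_iff[OF td _ L] by blast

lemma toric_sections_eq_UNIV_iff:
  assumes td: "toric_data F u v p"
  shows "sections F m = UNIV \<longleftrightarrow> m \<in> lattice_simplex (\<lambda>i. u i + int (v i))"
proof -
  have "sections F m = UNIV \<longleftrightarrow> (\<forall>i\<in>{1..4}. F i (pairing m i) = UNIV)"
    unfolding sections_def by blast
  then show ?thesis unfolding lattice_simplex_def using toric_filtration_eq_UNIV_iff[OF td] by simp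
qed

lemma finite_lattice_simplex_toric:
  assumes "(\<Sum>i\<in>{1..4}. u i) + int (\<Sum>i\<in>{1..4}. v i) + int z = 0"
  shows "finite (lattice_simplex u)"
  using assms by (intro card_lattice_simplex(1)[of _ "z + (\<Sum>i\<in>{1..4}. v i)"]) simp

lemma count_sections_containing_line:
  assumes td: "toric_data F u v p" and L: "L \<in> lines v p"
    and z: "(\<Sum>i\<in>{1..4}. u i) + int (\<Sum>i\<in>{1..4}. v i) + int z = 0"
  shows "(\<Sum>m\<in>lattice_simplex u. of_bool (L \<subseteq> sections F m)) = int ((z + line_weight v p L + 3) choose 3)"
proof -
  have "lattice_simplex u \<inter> {m. L \<subseteq> sections F m} = lattice_simplex (entry_index u v p L)"
    using toric_sections_subset_iff[OF td toric_data_lines_P1_point[OF td L]]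
      lattice_simplex_antimono[of u "entry_index u v p L"] unfolding entry_index_def by auto
  moreover have "line_weight v p L \<le> (\<Sum>i\<in>{1..4}. v i)"
    unfolding line_weight_def by (rule sum_mono) simp
  then have "(\<Sum>i\<in>{1..4}. entry_index u v p L i) + int (z + line_weight v p L) = 0"
    using z unfolding sum_entry_index by simp
  ultimately show ?thesis
    using finite_lattice_simplex_toric[OF z] card_lattice_simplex(2) by simp
qed

lemma count_full_sections:
  assumes td: "toric_data F u v p"
    and z: "(\<Sum>i\<in>{1..4}. u i) + int (\<Sum>i\<in>{1..4}. v i) + int z = 0"
  shows "(\<Sum>m\<in>lattice_simplex u. of_bool (sections F m = UNIV)) = int ((z + 3) choose 3)"
proof -
  have "lattice_simplex u \<inter> {m. sections F m = UNIV} = lattice_simplex (\<lambda>i. u i + int (v i))"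
    using toric_sections_eq_UNIV_iff[OF td] lattice_simplex_antimono[of u "\<lambda>i. u i + int (v i)"] by auto
  moreover have "(\<Sum>i\<in>{1..4}. u i + int (v i)) + int z = 0" using z by (simp add: sum.distrib)
  ultimately show ?thesis
    using finite_lattice_simplex_toric[OF z] card_lattice_simplex(2) by simp
qed

lemma h0_toric:
  assumes td: "toric_data F u v p"
    and z: "(\<Sum>i\<in>{1..4}. u i) + int (\<Sum>i\<in>{1..4}. v i) + int z = 0"
  shows "int (h0 F) = (\<Sum>L\<in>lines v p. int ((z + line_weight v p L + 3) choose 3))
    - (int (card (lines v p)) - 2) * int ((z + 3) choose 3)"
proof -
  define B where "B = lattice_simplex u"
  define c where "c = int (card (lines v p)) - 2"
  have "h0 F = (\<Sum>m\<in>B. cdim (sections F m))"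
    unfolding h0_def sections_dim_def sections_def[symmetric]
  proof (rule sum.mono_neutral_left[OF finite_lattice_simplex_toric[OF z, folded B_def]])
    show "{m. cdim (sections F m) \<noteq> 0} \<subseteq> B"
      using toric_sections_eq_zero[OF td] unfolding B_def cdim_def by fastforce
  qed simp
  then have "int (h0 F)
      = (\<Sum>m\<in>B. (\<Sum>L\<in>lines v p. of_bool (L \<subseteq> sections F m)) - c * of_bool (sections F m = UNIV))"
    using cdim_eq_count_lines[OF finite_lines _ sections_in_family[OF td]] toric_data_lines_P1_point[OF td]
    unfolding c_def by simp
  also have "\<dots> = (\<Sum>L\<in>lines v p. \<Sum>m\<in>B. of_bool (L \<subseteq> sections F m))
      - c * (\<Sum>m\<in>B. of_bool (sections F m = UNIV))"
    by (simp add: sum_subtractf sum_distrib_left sum.swap[of _ B])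
  finally show ?thesis
    unfolding B_def c_def count_full_sections[OF td z]
    using count_sections_containing_line[OF td _ z] by simp
qed

lemma toric_data_twist:
  assumes "toric_data F u v p"
  shows "toric_data (twist F t) (u(4 := u 4 - t)) v p"
  using assms unfolding toric_data_def twist_def by (auto simp: algebra_simps)

lemma hilbert_toric:
  assumes td: "toric_data F u v p"
    and t: "t = (\<Sum>i\<in>{1..4}. u i) + int (\<Sum>i\<in>{1..4}. v i) + int z"
  shows "int (hilbert F t) = (\<Sum>L\<in>lines v p. int ((z + line_weight v p L + 3) choose 3))
    - (int (card (lines v p)) - 2) * int ((z + 3) choose 3)"
proof -
  have "(\<Sum>i\<in>{1..4}. (u(4 := u 4 - t)) i) = (\<Sum>i\<in>{1..4}. u i) - t"
    unfolding sum_1_4 by simp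
  then show ?thesis
    unfolding hilbert_def using h0_toric[OF toric_data_twist[OF td], of t z] t by simp
qed

section \<open>Chern classes and stability\<close>

lemma six_times_choose_three: "6 * int ((n + 3) choose 3) = (int n + 1) * (int n + 2) * (int n + 3)"
proof -
  have "fact 3 * fact n * ((n + 3) choose 3) = (fact (n + 3) :: nat)"
    using binomial_fact_lemma[of 3 "n + 3"] by simp
  also have "(fact (n + 3) :: nat) = fact n * ((n + 1) * (n + 2) * (n + 3))"
    by (simp add: fact_Suc numeral_eq_Suc algebra_simps)
  finally have "fact n * (6 * ((n + 3) choose 3)) = fact n * ((n + 1) * (n + 2) * (n + 3))"
    by (simp add: fact_numeral mult_ac)
  then have "6 * ((n + 3) choose 3) = (n + 1) * (n + 2) * (n + 3)"
    using fact_nonzero[of n] mult_cancel_left by blast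
  then have "int (6 * ((n + 3) choose 3)) = int ((n + 1) * (n + 2) * (n + 3))" by (rule arg_cong)
  then show ?thesis by (simp add: algebra_simps)
qed

lemma six_times_choose_three_shifted:
  "6 * int ((z + w + 3) choose 3) = (int z + 1) * (int z + 2) * (int z + 3)
    + int w * (3 * int z^2 + 12 * int z + 11) + int w^2 * (3 * int z + 6) + int w^3"
proof -
  have "6 * int ((z + w + 3) choose 3) = (int z + int w + 1) * (int z + int w + 2) * (int z + int w + 3)"
    using six_times_choose_three[of "z + w"] by simp
  also have "\<dots> = (int z + 1) * (int z + 2) * (int z + 3)
    + int w * (3 * int z^2 + 12 * int z + 11) + int w^2 * (3 * int z + 6) + int w^3"
    by algebra
  finally show ?thesis .
qed

lemma hilbert_polynomial_toric:
  assumes td: "toric_data F u v p"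
    and t: "(\<Sum>i\<in>{1..4}. u i) + int (\<Sum>i\<in>{1..4}. v i) \<le> t"
  defines "x \<equiv> t - (\<Sum>i\<in>{1..4}. u i) - int (\<Sum>i\<in>{1..4}. v i)"
  shows "6 * int (hilbert F t) = 2 * ((x + 1) * (x + 2) * (x + 3))
    + power_sum 1 (line_weights v p) * (3 * x^2 + 12 * x + 11)
    + power_sum 2 (line_weights v p) * (3 * x + 6) + power_sum 3 (line_weights v p)"
proof -
  define n where "n = int (card (lines v p))"
  obtain z where z: "x = int z" using t unfolding x_def by (metis diff_ge_0_iff_ge diff_diff_eq zero_le_imp_eq_int)
  have "int (hilbert F t) = (\<Sum>L\<in>lines v p. int ((z + line_weight v p L + 3) choose 3))
      - (n - 2) * int ((z + 3) choose 3)"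
    unfolding n_def by (rule hilbert_toric[OF td]) (use z in \<open>simp add: x_def\<close>)
  then have "6 * int (hilbert F t) = (\<Sum>L\<in>lines v p. 6 * int ((z + line_weight v p L + 3) choose 3))
      - (n - 2) * (6 * int ((z + 3) choose 3))"
    by (simp add: sum_distrib_left[symmetric] algebra_simps)
  also have "\<dots> = (\<Sum>L\<in>lines v p. (x + 1) * (x + 2) * (x + 3) + int (line_weight v p L) * (3 * x^2 + 12 * x + 11)
      + int (line_weight v p L)^2 * (3 * x + 6) + int (line_weight v p L)^3)
      - (n - 2) * ((x + 1) * (x + 2) * (x + 3))"
    unfolding six_times_choose_three_shifted unfolding six_times_choose_three z ..
  also have "(\<Sum>L\<in>lines v p. (x + 1) * (x + 2) * (x + 3) + int (line_weight v p L) * (3 * x^2 + 12 * x + 11)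
        + int (line_weight v p L)^2 * (3 * x + 6) + int (line_weight v p L)^3)
      = n * ((x + 1) * (x + 2) * (x + 3)) + power_sum 1 (line_weights v p) * (3 * x^2 + 12 * x + 11)
        + power_sum 2 (line_weights v p) * (3 * x + 6) + power_sum 3 (line_weights v p)"
    unfolding power_sum_line_weights n_def by (simp add: sum.distrib sum_distrib_right)
  finally show ?thesis by (simp add: algebra_simps)
qed

lemma quadratic_eventually_zero:
  fixes \<alpha> \<beta> \<gamma> T :: int
  assumes "\<forall>t\<ge>T. \<alpha> * t^2 + \<beta> * t + \<gamma> = 0"
  shows "\<alpha> = 0" and "\<beta> = 0" and "\<gamma> = 0"
proof -
  have 0: "\<alpha> * T^2 + \<beta> * T + \<gamma> = 0" and 1: "\<alpha> * (T + 1)^2 + \<beta> * (T + 1) + \<gamma> = 0"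
    and 2: "\<alpha> * (T + 2)^2 + \<beta> * (T + 2) + \<gamma> = 0"
    using assms by auto
  have "2 * \<alpha> = (\<alpha> * (T + 2)^2 + \<beta> * (T + 2) + \<gamma>) - 2 * (\<alpha> * (T + 1)^2 + \<beta> * (T + 1) + \<gamma>)
      + (\<alpha> * T^2 + \<beta> * T + \<gamma>)"
    by algebra
  then show "\<alpha> = 0" using 0 1 2 by simp
  moreover have "\<beta> = (\<alpha> * (T + 1)^2 + \<beta> * (T + 1) + \<gamma>) - (\<alpha> * T^2 + \<beta> * T + \<gamma>) - \<alpha> * (2 * T + 1)"
    by algebra
  ultimately show "\<beta> = 0" using 0 1 by simp
  with 0 \<open>\<alpha> = 0\<close> show "\<gamma> = 0" by simp
qed

lemma chern_classes_of_hilbert_polynomial: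
  fixes y P1 P2 P3 :: int
  assumes "has_chern_classes F c1 c2 c3"
    and hilbert: "\<forall>t\<ge>T. 6 * int (hilbert F t) = 2 * ((t + y + 1) * (t + y + 2) * (t + y + 3))
      + P1 * (3 * (t + y)^2 + 12 * (t + y) + 11) + P2 * (3 * (t + y) + 6) + P3"
  shows "c1 = 2 * y + P1" and "2 * c2 = 2 * y^2 + 2 * y * P1 + P1^2 - P2"
    and "6 * c3 = P1^3 - 3 * P1 * P2 + 2 * P3"
proof -
  obtain T' where rr: "\<forall>t\<ge>T'. (let a = c1 + 2 * t; b = c2 + c1 * t + t^2 in
      6 * int (hilbert F t) = a^3 - 3 * a * b + 3 * c3 + 6 * (a^2 - 2 * b) + 11 * a + 12)"
    using assms(1) unfolding has_chern_classes_def by blast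
  define \<alpha> where "\<alpha> = 3 * c1 - 6 * y - 3 * P1"
  define \<beta> where "\<beta> = 3 * c1^2 - 6 * c2 + 12 * c1 - 6 * y^2 - 24 * y - 6 * y * P1 - 12 * P1 - 3 * P2"
  define \<gamma> where "\<gamma> = c1^3 - 3 * c1 * c2 + 3 * c3 + 6 * c1^2 - 12 * c2 + 11 * c1
    - (2 * y^3 + 12 * y^2 + 22 * y + P1 * (3 * y^2 + 12 * y + 11) + P2 * (3 * y + 6) + P3)"
  \<comment> \<open>\<open>\<alpha> t\<^sup>2 + \<beta> t + \<gamma>\<close> is Riemann-Roch minus the computed Hilbert polynomial\<close>
  have "\<forall>t\<ge>max T T'. \<alpha> * t^2 + \<beta> * t + \<gamma> = 0"
  proof (intro allI impI)
    fix t assume "max T T' \<le> t"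
    then have "T \<le> t" "T' \<le> t" by simp_all
    have "(c1 + 2 * t)^3 - 3 * (c1 + 2 * t) * (c2 + c1 * t + t^2) + 3 * c3
        + 6 * ((c1 + 2 * t)^2 - 2 * (c2 + c1 * t + t^2)) + 11 * (c1 + 2 * t) + 12
      = 2 * ((t + y + 1) * (t + y + 2) * (t + y + 3))
        + P1 * (3 * (t + y)^2 + 12 * (t + y) + 11) + P2 * (3 * (t + y) + 6) + P3"
      using rr[rule_format, OF \<open>T' \<le> t\<close>, unfolded Let_def, symmetric]
        hilbert[rule_format, OF \<open>T \<le> t\<close>] by (rule trans)
    then show "\<alpha> * t^2 + \<beta> * t + \<gamma> = 0" unfolding \<alpha>_def \<beta>_def \<gamma>_def by algebra
  qed
  note coeffs = quadratic_eventually_zero[OF this]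
  show c1: "c1 = 2 * y + P1" using coeffs(1) unfolding \<alpha>_def by simp
  have "3 * (2 * c2) = 3 * (2 * y^2 + 2 * y * P1 + P1^2 - P2)"
    using coeffs(2) unfolding \<beta>_def c1 by algebra
  then show c2: "2 * c2 = 2 * y^2 + 2 * y * P1 + P1^2 - P2" by simp
  show "6 * c3 = P1^3 - 3 * P1 * P2 + 2 * P3"
    using coeffs(3) c2 unfolding \<gamma>_def c1 by algebra
qed

lemma chern_classes_toric:
  assumes td: "toric_data F u v p" and "has_chern_classes F c1 c2 c3"
  defines "y \<equiv> - (\<Sum>i\<in>{1..4}. u i) - int (\<Sum>i\<in>{1..4}. v i)" and "W \<equiv> line_weights v p"
  shows "c1 = 2 * y + power_sum 1 W"
    and "2 * c2 = 2 * y^2 + 2 * y * power_sum 1 W + power_sum 1 W ^ 2 - power_sum 2 W"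
    and "6 * c3 = power_sum 1 W ^ 3 - 3 * power_sum 1 W * power_sum 2 W + 2 * power_sum 3 W"
proof -
  have "\<forall>t\<ge>- y. 6 * int (hilbert F t) = 2 * ((t + y + 1) * (t + y + 2) * (t + y + 3))
      + power_sum 1 W * (3 * (t + y)^2 + 12 * (t + y) + 11) + power_sum 2 W * (3 * (t + y) + 6) + power_sum 3 W"
    using hilbert_polynomial_toric[OF td] unfolding y_def W_def by (simp add: algebra_simps)
  then show "c1 = 2 * y + power_sum 1 W"
    and "2 * c2 = 2 * y^2 + 2 * y * power_sum 1 W + power_sum 1 W ^ 2 - power_sum 2 W"
    and "6 * c3 = power_sum 1 W ^ 3 - 3 * power_sum 1 W * power_sum 2 W + 2 * power_sum 3 W"
    using chern_classes_of_hilbert_polynomial[OF assms(2)] by blast+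
qed

lemma toric_sub_c1:
  assumes td: "toric_data F u v p" and W: "is_P1_point W"
  shows "sub_c1 F W = int (line_weight v p W) - (\<Sum>i\<in>{1..4}. u i) - int (\<Sum>i\<in>{1..4}. v i)"
proof -
  have least: "(LEAST l. W \<inter> F i l \<noteq> {czero}) = entry_index u v p W i" if "i \<in> {1..4}" for i
    by (rule Least_equality) (simp_all add: toric_filtration_meet_iff[OF td that W])
  have "sub_c1 F W = - (\<Sum>i\<in>{1..4}. entry_index u v p W i)"
    unfolding sub_c1_def by (subst sum.cong[OF refl least]) simp_all
  then show ?thesis unfolding sum_entry_index by simp
qed

lemma toric_line_weight_below_half:
  assumes td: "toric_data F u v p" and "mu_stable F" "has_chern_classes F c1 c2 c3"
    and W: "is_P1_point W"
  shows "2 * line_weight v p W < (\<Sum>i\<in>{1..4}. v i)"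
proof -
  have "2 * sub_c1 F W < c1" using assms(2,3) W unfolding mu_stable_def by blast
  then have "int (2 * line_weight v p W) < int (\<Sum>i\<in>{1..4}. v i)"
    using chern_classes_toric(1)[OF td assms(3)] toric_sub_c1[OF td W]
    unfolding power_sum_1_line_weights by simp
  then show ?thesis by (simp only: of_nat_less_iff)
qed

theorem proposition3p8:
  fixes V :: "nat \<Rightarrow> int \<Rightarrow> vec2 set" and u :: "nat \<Rightarrow> int" and v :: "nat \<Rightarrow> nat"
    and p :: "nat \<Rightarrow> vec2 set" and c1 c2 c3 :: int
  assumes "klyachko_filtrations V"
    and "mu_stable V"
    and "has_chern_classes V c1 c2 c3"
    and "toric_data V u v p"
  shows "even (c3 - c1 * c2)
    \<and> (c1 \<in> {-1, 0} \<longrightarrow> c2 > 0)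
    \<and> (c1 = -1 \<longrightarrow> 0 \<le> c3 \<and> c3 \<le> c2^2)
    \<and> (c1 = 0 \<longrightarrow> 0 \<le> c3 \<and> c3 \<le> c2^2 - c2 + 2)
    \<and> (c1 = -1 \<longrightarrow> (c3 = c2^2 \<longleftrightarrow>
          (\<exists>i j k l. is_ordering4 i j k l \<and> p i = p j \<and> p j \<noteq> p k \<and> p j \<noteq> p l \<and> p k \<noteq> p l
              \<and> v i \<ge> 1 \<and> v j \<ge> 1 \<and> v k = 1 \<and> v i + v j = v l)
        \<or> (\<exists>i j k l. is_ordering4 i j k l \<and> v i = 0 \<and> p j \<noteq> p k \<and> p j \<noteq> p l \<and> p k \<noteq> p l
              \<and> v j = 1 \<and> v k = v l \<and> v k \<ge> 1)))
    \<and> (c1 = 0 \<longrightarrow> (c3 = c2^2 - c2 + 2 \<longleftrightarrow>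
          (p 1 \<noteq> p 2 \<and> p 1 \<noteq> p 3 \<and> p 1 \<noteq> p 4 \<and> p 2 \<noteq> p 3 \<and> p 2 \<noteq> p 4 \<and> p 3 \<noteq> p 4
              \<and> v 1 = 1 \<and> v 2 = 1 \<and> v 3 = 1 \<and> v 4 = 1)
        \<or> (\<exists>i j k l. is_ordering4 i j k l \<and> p i = p j \<and> p j \<noteq> p k \<and> p j \<noteq> p l \<and> p k \<noteq> p l
              \<and> v i = 1 \<and> v j = 1 \<and> v k = 2 \<and> v l = 2)
        \<or> (\<exists>i j k l. is_ordering4 i j k l \<and> v i = 0 \<and> p j \<noteq> p k \<and> p j \<noteq> p l \<and> p k \<noteq> p l
              \<and> v j = 2 \<and> v k = 2 \<and> v l = 2)))"
proof -
  \<comment> \<open>the toric data determine the filtrations\<close>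
  note td = assms(4)
  have below_half: "2 * line_weight v p L < (\<Sum>i\<in>{1..4}. v i)" if "is_P1_point L" for L
    using toric_line_weight_below_half[OF td assms(2,3) that] .
  have "0 < (\<Sum>i\<in>{1..4}. v i)" using below_half[OF P1_point_cline_1_0] by linarith
  then have nonempty: "lines v p \<noteq> {}" using sum_line_weight[of v p] by auto
  have lines_below_half: "\<forall>L\<in>lines v p. 2 * line_weight v p L < (\<Sum>i\<in>{1..4}. v i)"
    using below_half toric_data_lines_P1_point[OF td] by blast
  note weights = line_weights_if_below_half[OF lines_below_half nonempty]
  note bounds = chern_bounds_of_weight_mset[OF weights(2-4) chern_classes_toric[OF td assms(3)]]
  note configs = extremal_configs_iff_line_weights[OF weights(1),
      unfolded extremal_config_odd_def extremal_config_even_def]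
  show ?thesis using bounds unfolding configs[symmetric] .
qed

end
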